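(* Let $\mathcal{E}$ be the 2D Laplace equation $u_{xx}+u_{yy}=0$, with cotangent equation $\{u_{xx}+u_{yy}=0,\ p_{xx}+p_{yy}=0\}$, and consider the variational bivectors $B_0=p$, $B_1=p_{yy}$, $B_2=p_{xy}$, $B_3=p_y+2(xp_{xy}+yp_{yy})$, $B_4=p_x+2(yp_{xy}-xp_{yy})$, $B_5=u_{yy}p_y-u_{xy}p_x+2(u_yp_{yy}-u_xp_{xy})$, $B_6=u_{yy}p_x+u_{xy}p_y+2(u_yp_{xy}+u_xp_{yy})$, $B_7=(u_y+xu_{xy}+yu_{yy})p_x+(u_x+yu_{xy}-xu_{yy})p_y+2(yu_x-xu_y)p_{yy}+2(xu_x+yu_y)p_{xy}$, $B_8=-(u_x+yu_{xy}-xu_{yy})p_x+(u_y+xu_{xy}+yu_{yy})p_y+2(xu_x+yu_y)p_{yy}-2(yu_x-xu_y)p_{xy}$. Then $B_0,\dots,B_4$ are Poisson structures on $\mathcal{E}$, while $B_5,\dots,B_8$ are not Poisson structures; moreover, the Schouten brackets $[\![B_i,B_j]\!]$ are nonzero for all $5\le i\le j\le 8$.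
   Context: Setting: a scalar PDE $\mathcal{E}=\{F=0\}$ for one unknown $u(x^1,\dots,x^n)$, regarded as a submanifold of the infinite jet space with coordinates $x^i$, $u_\sigma$ ($\sigma$ a multi-index). $D_i$ are total derivatives, $D_\sigma$ their compositions. A $\mathcal{C}$-differential operator is an operator of the form $\sum_\sigma a^\sigma D_\sigma$ with smooth coefficients on the jet space (or on $\mathcal{E}$). The linearization is $\ell_F=\sum_\sigma \frac{\partial F}{\partial u_\sigma}D_\sigma$ and $\ell_{\mathcal{E}}$ its restriction to $\mathcal{E}$; $\Delta^*$ denotes the formal adjoint ($(\sum a^\sigma D_\sigma)^*=\sum(-1)^{|\sigma|}D_\sigma\circ a^\sigma$). The cotangent equation $\mathcal{T}^*\mathcal{E}$ is the system $\{F=0,\ \ell_F(p)=0\}$ (with all differential consequences), where $p$ is a new unknown of odd parity, so that all $p_\sigma$ are odd (anticommuting; in particular $p_\sigma p_\sigma=0$). Variational bivector: a $\mathcal{C}$-differential operator $H=\sum_\sigma h^\sigma D_\sigma$ on $\mathcal{E}$ such that (i) $\ell_{\mathcal{E}}(H_u)=0$ on $\mathcal{T}^*\mathcal{E}$, where $H_u=H(p)=\sum_\sigma h^\sigma p_\sigma$; and (ii) $H^*\circ\ell_{\mathcal{E}}^*=\ell_{\mathcal{E}}\circ H$ as operators on $\mathcal{E}$. Bivectors are identified with their functions $H_u$ (so "$B=\sum B_\sigma p_\sigma$" means $B=\sum B_\sigma D_\sigma$). Schouten bracket: for a bivector $H$, choose a bi-differential operator $\nabla$ in total derivatives on the jet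 space of $(u,p)$ with $\ell_F(H(p))-H^*(\ell_F(p))=\nabla(F,p)$ identically, and set $H_p=-\tfrac12\nabla^{*_1}(p,p)\big|_{\mathcal{T}^*\mathcal{E}}$ (even element quadratic in the $p_\sigma$; $\nabla^{*_1}$ is the adjoint in the first argument). Let $\mathrm{Ev}_{\phi(H)}=\sum_\sigma D_\sigma(H_u)\partial/\partial u_\sigma+D_\sigma(H_p)\partial/\partial p_\sigma$ (odd evolutionary derivation on $\mathcal{T}^*\mathcal{E}$). The Schouten bracket of bivectors $H,H'$ is $[\![H,H']\!]=\mathrm{Ev}_{\phi(H)}(H'_u)+\mathrm{Ev}_{\phi(H')}(H_u)$, a function on $\mathcal{T}^*\mathcal{E}$. $H$ is a Poisson structure if $[\![H,H]\!]=0$; two Poisson structures $H,H'$ are compatible if $[\![H,H']\!]=0$. *)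

theory Defs
  imports "HOL-Analysis.Analysis"
begin

text \<open>Coordinates: x, y and u_(i,j) = D_x^i D_y^j u.  A multi-index is a pair (i,j).\<close>
datatype jvar = JX | JY | JU "nat \<times> nat"

type_synonym jpt  = "jvar \<Rightarrow> real"
type_synonym jfun = "jpt \<Rightarrow> real"

text \<open>Elements linear in the odd variables p_sigma: a coefficient for each p_sigma
  (i.e. the function sum_sigma L sigma * p_sigma; also a C-differential operator
  sum_sigma L sigma * D_sigma).\<close>
type_synonym lin  = "nat \<times> nat \<Rightarrow> jfun"
text \<open>Elements quadratic in the odd variables: q rho kappa is the coefficient of the
  (ordered) product p_rho p_kappa.\<close>
type_synonym quad = "nat \<times> nat \<Rightarrow> nat \<times> nat \<Rightarrow> jfun"

definition pd :: "jvar \<Rightarrow> jfun \<Rightarrow> jfun" where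
  "pd v f = (\<lambda>pt. deriv (\<lambda>t. f (pt(v := t))) (pt v))"

fun pds :: "jvar list \<Rightarrow> jfun \<Rightarrow> jfun" where
  "pds [] f = f"
| "pds (v # vs) f = pd v (pds vs f)"

definition smooth_jet :: "jfun \<Rightarrow> bool" where
  "smooth_jet f \<longleftrightarrow>
     (\<exists>S. finite S \<and> (\<forall>pt pt'. (\<forall>v\<in>S. pt v = pt' v) \<longrightarrow> f pt = f pt')) \<and>
     (\<forall>vs. continuous_on UNIV (pds vs f) \<and>
            (\<forall>v pt. (\<lambda>t. pds vs f (pt(v := t))) differentiable (at (pt v))))"

definition DX :: "jfun \<Rightarrow> jfun" where
  "DX f = (\<lambda>pt. pd JX f pt +
      sum (\<lambda>s. pt (JU (fst s + 1, snd s)) * pd (JU s) f pt) {s. pd (JU s) f \<noteq> (\<lambda>_. 0)})"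

definition DY :: "jfun \<Rightarrow> jfun" where
  "DY f = (\<lambda>pt. pd JY f pt +
      sum (\<lambda>s. pt (JU (fst s, snd s + 1)) * pd (JU s) f pt) {s. pd (JU s) f \<noteq> (\<lambda>_. 0)})"

definition Dm :: "nat \<times> nat \<Rightarrow> jfun \<Rightarrow> jfun" where
  "Dm s f = (DX ^^ fst s) ((DY ^^ snd s) f)"

text \<open>Total derivatives on p-linear elements: D(f p_s) = D(f) p_s + f p_(s+1).\<close>
definition LDX :: "lin \<Rightarrow> lin" where
  "LDX L = (\<lambda>s pt. DX (L s) pt + (if fst s > 0 then L (fst s - 1, snd s) pt else 0))"

definition LDY :: "lin \<Rightarrow> lin" where
  "LDY L = (\<lambda>s pt. DY (L s) pt + (if snd s > 0 then L (fst s, snd s - 1) pt else 0))"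

definition LD :: "nat \<times> nat \<Rightarrow> lin \<Rightarrow> lin" where
  "LD s L = (LDX ^^ fst s) ((LDY ^^ snd s) L)"

text \<open>Total derivatives on p-quadratic elements (Leibniz rule; the derivations are even).\<close>
definition QDX :: "quad \<Rightarrow> quad" where
  "QDX q = (\<lambda>r k pt. DX (q r k) pt
      + (if fst r > 0 then q (fst r - 1, snd r) k pt else 0)
      + (if fst k > 0 then q r (fst k - 1, snd k) pt else 0))"

definition QDY :: "quad \<Rightarrow> quad" where
  "QDY q = (\<lambda>r k pt. DY (q r k) pt
      + (if snd r > 0 then q (fst r, snd r - 1) k pt else 0)
      + (if snd k > 0 then q r (fst k, snd k - 1) pt else 0))"

definition QD :: "nat \<times> nat \<Rightarrow> quad \<Rightarrow> quad" where
  "QD s q = (QDX ^^ fst s) ((QDY ^^ snd s) q)"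

definition Flap :: jfun where
  "Flap = (\<lambda>pt. pt (JU (2,0)) + pt (JU (0,2)))"

text \<open>Linearization ell_F = D_x^2 + D_y^2 (F is linear), applied to p-linear elements.\<close>
definition lapL :: "lin \<Rightarrow> lin" where
  "lapL L = (\<lambda>s pt. LDX (LDX L) s pt + LDY (LDY L) s pt)"

definition pL :: lin where
  "pL = (\<lambda>s pt. if s = (0,0) then 1 else 0)"

text \<open>Points of the infinitely prolonged equation E: all D_sigma F = 0.\<close>
definition onE :: "jpt \<Rightarrow> bool" where
  "onE pt \<longleftrightarrow> (\<forall>i j. pt (JU (i, j + 2)) + pt (JU (i + 2, j)) = 0)"

definition zeroE :: "jfun \<Rightarrow> bool" where
  "zeroE f \<longleftrightarrow> (\<forall>pt. onE pt \<longrightarrow> f pt = 0)"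

text \<open>Restriction to T*E of the odd part: on T*E, p_(i,j+2) = - p_(i+2,j), so
  p_(a-2k, b+2k) = (-1)^k p_(a,b) with internal coordinates p_(a,b), b <= 1.
  Lred gives the coefficient of the internal coordinate p_(a,b).\<close>
definition Lred :: "lin \<Rightarrow> nat \<times> nat \<Rightarrow> jfun" where
  "Lred L ab = (\<lambda>pt. \<Sum>k\<le>fst ab div 2.
      (-1) ^ k * L (fst ab - 2*k, snd ab + 2*k) pt)"

definition Qred :: "quad \<Rightarrow> nat \<times> nat \<Rightarrow> nat \<times> nat \<Rightarrow> jfun" where
  "Qred q ab cd = (\<lambda>pt. \<Sum>k\<le>fst ab div 2. \<Sum>l\<le>fst cd div 2.
      (-1) ^ (k + l) * q (fst ab - 2*k, snd ab + 2*k) (fst cd - 2*l, snd cd + 2*l) pt)"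

definition zeroT_L :: "lin \<Rightarrow> bool" where
  "zeroT_L L \<longleftrightarrow> (\<forall>ab. snd ab \<le> 1 \<longrightarrow> zeroE (Lred L ab))"

text \<open>A p-quadratic function vanishes on T*E (p's anticommute, so only the
  antisymmetrized internal coefficients matter).\<close>
definition zeroT_Q :: "quad \<Rightarrow> bool" where
  "zeroT_Q q \<longleftrightarrow> (\<forall>ab cd. snd ab \<le> 1 \<longrightarrow> snd cd \<le> 1 \<longrightarrow>
       zeroE (\<lambda>pt. Qred q ab cd pt - Qred q cd ab pt))"

definition adjL :: "lin \<Rightarrow> lin \<Rightarrow> lin" where
  "adjL H phi = (\<lambda>r pt. \<Sum>s\<in>{s. H s \<noteq> (\<lambda>_. 0)}.
      (-1) ^ (fst s + snd s) * LD s (\<lambda>k pt'. H s pt' * phi k pt') r pt)"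

definition var_bivector :: "lin \<Rightarrow> bool" where
  "var_bivector H \<longleftrightarrow> finite {s. H s \<noteq> (\<lambda>_. 0)} \<and> (\<forall>s. smooth_jet (H s)) \<and>
     zeroT_L (lapL H) \<and>
     (\<forall>k. zeroE (\<lambda>pt. adjL H (lapL pL) k pt - lapL H k pt))"

text \<open>A bi-differential operator nabla(a,b) = sum c s t D_s(a) D_t(b) (coefficients
  smooth functions of (x,y,u), finitely many nonzero) is admissible for H if
  ell_F(H(p)) - H*(ell_F(p)) = nabla(F,p) identically on the jet space.\<close>
definition admissible :: "lin \<Rightarrow> (nat \<times> nat \<Rightarrow> nat \<times> nat \<Rightarrow> jfun) \<Rightarrow> bool" where
  "admissible H c \<longleftrightarrow> finite {(s,t). c s t \<noteq> (\<lambda>_. 0)} \<and> (\<forall>s t. smooth_jet (c s t)) \<and>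
     (\<forall>k pt. lapL H k pt - adjL H (lapL pL) k pt =
             (\<Sum>s\<in>{s. c s k \<noteq> (\<lambda>_. 0)}. c s k pt * Dm s Flap pt))"

text \<open>H_p = -1/2 nabla^{*1}(p,p), with
  nabla^{*1}(q,b) = sum_s (-1)^|s| D_s(q * sum_t c s t D_t b).\<close>
definition Hp :: "(nat \<times> nat \<Rightarrow> nat \<times> nat \<Rightarrow> jfun) \<Rightarrow> quad" where
  "Hp c = (\<lambda>r k pt. - (1/2) * (\<Sum>s\<in>{s. \<exists>t. c s t \<noteq> (\<lambda>_. 0)}.
      (-1) ^ (fst s + snd s) *
      QD s (\<lambda>r' k' pt'. if r' = (0,0) then c s k' pt' else 0) r k pt))"

text \<open>Ev_phi(H) (H'_u) with Ev_phi(H) = sum D_s(H_u) d/du_s + D_s(H_p) d/dp_s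
  (odd derivation, coefficients on the left, left derivatives), H'_u = sum h'^t p_t.\<close>
definition evq :: "lin \<Rightarrow> (nat \<times> nat \<Rightarrow> nat \<times> nat \<Rightarrow> jfun) \<Rightarrow> lin \<Rightarrow> quad" where
  "evq H c H' = (\<lambda>r k pt.
      (\<Sum>s\<in>{s. H' s \<noteq> (\<lambda>_. 0)}. H' s pt * QD s (Hp c) r k pt) +
      (\<Sum>s\<in>{s. pd (JU s) (H' k) \<noteq> (\<lambda>_. 0)}. LD s H r pt * pd (JU s) (H' k) pt))"

definition schouten :: "lin \<Rightarrow> (nat \<times> nat \<Rightarrow> nat \<times> nat \<Rightarrow> jfun) \<Rightarrow>
                        lin \<Rightarrow> (nat \<times> nat \<Rightarrow> nat \<times> nat \<Rightarrow> jfun) \<Rightarrow> quad" where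
  "schouten H c H' c' = (\<lambda>r k pt. evq H c H' r k pt + evq H' c' H r k pt)"

definition schouten_zero :: "lin \<Rightarrow> lin \<Rightarrow> bool" where
  "schouten_zero H H' \<longleftrightarrow> (\<exists>c. admissible H c) \<and> (\<exists>c'. admissible H' c') \<and>
     (\<forall>c c'. admissible H c \<longrightarrow> admissible H' c' \<longrightarrow> zeroT_Q (schouten H c H' c'))"

definition schouten_nonzero :: "lin \<Rightarrow> lin \<Rightarrow> bool" where
  "schouten_nonzero H H' \<longleftrightarrow> (\<exists>c. admissible H c) \<and> (\<exists>c'. admissible H' c') \<and>
     (\<forall>c c'. admissible H c \<longrightarrow> admissible H' c' \<longrightarrow> \<not> zeroT_Q (schouten H c H' c'))"

definition poisson :: "lin \<Rightarrow> bool" where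
  "poisson H \<longleftrightarrow> var_bivector H \<and> schouten_zero H H"

definition mkL :: "((nat \<times> nat) \<times> jfun) list \<Rightarrow> lin" where
  "mkL xs = (\<lambda>s pt. \<Sum>(t,f)\<leftarrow>xs. if t = s then f pt else 0)"

abbreviation (input) cx :: jfun where "cx \<equiv> (\<lambda>pt. pt JX)"
abbreviation (input) cy :: jfun where "cy \<equiv> (\<lambda>pt. pt JY)"
abbreviation (input) cu :: "nat \<Rightarrow> nat \<Rightarrow> jfun" where "cu i j \<equiv> (\<lambda>pt. pt (JU (i,j)))"

definition B0 :: lin where "B0 = mkL [((0,0), \<lambda>pt. 1)]"
definition B1 :: lin where "B1 = mkL [((0,2), \<lambda>pt. 1)]"
definition B2 :: lin where "B2 = mkL [((1,1), \<lambda>pt. 1)]"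
definition B3 :: lin where
  "B3 = mkL [((0,1), \<lambda>pt. 1), ((1,1), \<lambda>pt. 2 * pt JX), ((0,2), \<lambda>pt. 2 * pt JY)]"
definition B4 :: lin where
  "B4 = mkL [((1,0), \<lambda>pt. 1), ((1,1), \<lambda>pt. 2 * pt JY), ((0,2), \<lambda>pt. - 2 * pt JX)]"
definition B5 :: lin where
  "B5 = mkL [((0,1), cu 0 2), ((1,0), \<lambda>pt. - cu 1 1 pt),
             ((0,2), \<lambda>pt. 2 * cu 0 1 pt), ((1,1), \<lambda>pt. - 2 * cu 1 0 pt)]"
definition B6 :: lin where
  "B6 = mkL [((1,0), cu 0 2), ((0,1), cu 1 1),
             ((1,1), \<lambda>pt. 2 * cu 0 1 pt), ((0,2), \<lambda>pt. 2 * cu 1 0 pt)]"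
definition B7 :: lin where
  "B7 = mkL [((1,0), \<lambda>pt. cu 0 1 pt + cx pt * cu 1 1 pt + cy pt * cu 0 2 pt),
             ((0,1), \<lambda>pt. cu 1 0 pt + cy pt * cu 1 1 pt - cx pt * cu 0 2 pt),
             ((0,2), \<lambda>pt. 2 * (cy pt * cu 1 0 pt - cx pt * cu 0 1 pt)),
             ((1,1), \<lambda>pt. 2 * (cx pt * cu 1 0 pt + cy pt * cu 0 1 pt))]"
definition B8 :: lin where
  "B8 = mkL [((1,0), \<lambda>pt. - (cu 1 0 pt + cy pt * cu 1 1 pt - cx pt * cu 0 2 pt)),
             ((0,1), \<lambda>pt. cu 0 1 pt + cx pt * cu 1 1 pt + cy pt * cu 0 2 pt),
             ((0,2), \<lambda>pt. 2 * (cx pt * cu 1 0 pt + cy pt * cu 0 1 pt)),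
             ((1,1), \<lambda>pt. - 2 * (cy pt * cu 1 0 pt - cx pt * cu 0 1 pt))]"

definition B :: "nat \<Rightarrow> lin" where
  "B i = [B0, B1, B2, B3, B4, B5, B6, B7, B8] ! i"

end

theory Submission
  imports Defs
begin

(* Every identity to be checked is a polynomial identity in finitely many jet coordinates, so the
   proof is a certified computation: bivectors, nablas and brackets are represented by symbolic
   polynomial expressions whose normal forms are computed, after eliminating
   u_(i,j+2) = - u_(i+2,j) wherever only the restriction to E matters.

   The one conceptual point is that the bracket on T*E does not depend on the choice of nabla.
   Two admissible choices differ by a syzygy sum_s d_s D_s(F) = 0; moving a point of E along a
   direction that changes a single D_s(F) shows that each d_s vanishes on E, and differentiating
   the syzygy shows the same for all total derivatives of d_s.

   B_0, ..., B_4 do not depend on u and admit nabla = 0, so their self-brackets vanish. For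
   B_5, ..., B_8 the coefficient of p_(1,1) p_(2,1) of each bracket on T*E is evaluated at an
   explicit point of E and is nonzero. *)

section \<open>Smooth functions on the jet space\<close>

definition jet_regular :: "jfun \<Rightarrow> bool" where
  "jet_regular g \<longleftrightarrow> continuous_on UNIV g \<and> (\<forall>v pt. (\<lambda>t. g (pt(v := t))) differentiable (at (pt v)))"

definition finitely_dependent :: "jfun \<Rightarrow> bool" where
  "finitely_dependent f \<longleftrightarrow> (\<exists>S. finite S \<and> (\<forall>pt pt'. (\<forall>v\<in>S. pt v = pt' v) \<longrightarrow> f pt = f pt'))"

lemma smooth_jet_iff: "smooth_jet f \<longleftrightarrow> finitely_dependent f \<and> (\<forall>vs. jet_regular (pds vs f))"
  unfolding smooth_jet_def finitely_dependent_def jet_regular_def by blast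

lemma jet_regular_has_derivative:
  assumes "jet_regular g"
  shows "((\<lambda>t. g (pt(v := t))) has_real_derivative pd v g pt) (at (pt v))"
proof -
  have "(\<lambda>t. g (pt(v := t))) differentiable (at (pt v))"
    using assms unfolding jet_regular_def by blast
  then show ?thesis
    unfolding pd_def using DERIV_deriv_iff_real_differentiable by blast
qed

lemma pd_add:
  assumes "jet_regular f" "jet_regular g"
  shows "pd v (\<lambda>pt. f pt + g pt) = (\<lambda>pt. pd v f pt + pd v g pt)"
  unfolding pd_def[of v "\<lambda>pt. f pt + g pt"]
  by (rule ext, rule DERIV_imp_deriv,
      rule DERIV_add[OF jet_regular_has_derivative[OF assms(1)] jet_regular_has_derivative[OF assms(2)]])

lemma pd_mult:
  assumes "jet_regular f" "jet_regular g"
  shows "pd v (\<lambda>pt. f pt * g pt) = (\<lambda>pt. pd v f pt * g pt + f pt * pd v g pt)"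
proof
  fix pt
  have "((\<lambda>t. f (pt(v := t)) * g (pt(v := t))) has_real_derivative
        pd v f pt * g pt + pd v g pt * f pt) (at (pt v))"
    using DERIV_mult[OF jet_regular_has_derivative[OF assms(1), of pt v]
        jet_regular_has_derivative[OF assms(2), of pt v]]
    by simp
  then show "pd v (\<lambda>pt. f pt * g pt) pt = pd v f pt * g pt + f pt * pd v g pt"
    unfolding pd_def[of v "\<lambda>pt. f pt * g pt"] by (simp add: DERIV_imp_deriv mult.commute)
qed

lemma pd_const: "pd v (\<lambda>pt. c) = (\<lambda>pt. 0)"
  unfolding pd_def by simp

lemma pd_coord: "pd v (\<lambda>pt. pt w) = (\<lambda>pt. if v = w then 1 else 0)"
  unfolding pd_def by (cases "v = w") auto

lemma pd_indep:
  assumes "\<And>pt pt'. (\<forall>v\<in>S. pt v = pt' v) \<Longrightarrow> f pt = f pt'" and "v \<notin> S"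
  shows "pd v f = (\<lambda>pt. 0)"
proof
  fix pt
  have "(\<lambda>t. f (pt(v := t))) = (\<lambda>t. f pt)" using assms by (auto intro!: ext)
  then show "pd v f pt = 0" unfolding pd_def by simp
qed

lemma jet_regular_const: "jet_regular (\<lambda>pt. c)"
  unfolding jet_regular_def by simp

lemma jet_regular_coord: "jet_regular (\<lambda>pt. pt w)"
proof -
  have "(\<lambda>t. (pt(v := t)) w) differentiable (at (pt v))" for pt v
    by (cases "v = w") simp_all
  moreover have "continuous_on UNIV (\<lambda>pt. pt w)" by simp
  ultimately show ?thesis unfolding jet_regular_def by blast
qed

lemma jet_regular_add: "jet_regular f \<Longrightarrow> jet_regular g \<Longrightarrow> jet_regular (\<lambda>pt. f pt + g pt)"
  unfolding jet_regular_def by (auto intro!: continuous_intros)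

lemma jet_regular_mult: "jet_regular f \<Longrightarrow> jet_regular g \<Longrightarrow> jet_regular (\<lambda>pt. f pt * g pt)"
  unfolding jet_regular_def by (auto intro!: continuous_intros)

inductive generated_by :: "jfun set \<Rightarrow> jfun \<Rightarrow> bool" for F where
  generated_by_base: "g \<in> F \<Longrightarrow> generated_by F g"
| generated_by_const: "generated_by F (\<lambda>pt. c)"
| generated_by_add: "generated_by F f \<Longrightarrow> generated_by F g \<Longrightarrow> generated_by F (\<lambda>pt. f pt + g pt)"
| generated_by_mult: "generated_by F f \<Longrightarrow> generated_by F g \<Longrightarrow> generated_by F (\<lambda>pt. f pt * g pt)"

lemma generated_by_pds:
  assumes F: "\<And>g. g \<in> F \<Longrightarrow> jet_regular g \<and> (\<forall>v. pd v g \<in> F)"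
    and "generated_by F h"
  shows "generated_by F (pds vs h) \<and> jet_regular (pds vs h)"
proof -
  have step: "jet_regular h \<and> (\<forall>v. generated_by F (pd v h))" if "generated_by F h" for h
    using that
  proof (induction rule: generated_by.induct)
    case (generated_by_base g)
    then show ?case using F by (auto intro: generated_by.generated_by_base)
  next
    case (generated_by_const c)
    then show ?case
      by (auto simp: jet_regular_const pd_const intro: generated_by.generated_by_const)
  next
    case (generated_by_add f g)
    then show ?case by (auto simp: jet_regular_add pd_add intro: generated_by.generated_by_add)
  next
    case (generated_by_mult f g)
    then show ?case
      by (auto simp: jet_regular_mult pd_mult
          intro!: generated_by.generated_by_add generated_by.generated_by_mult)
  qed
  show ?thesis by (induction vs) (use assms(2) step in auto)
qed

lemma finitely_dependent_pd:
  assumes "finitely_dependent f" shows "finitely_dependent (pd v f)"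
proof -
  obtain S where S: "finite S" "\<And>pt pt'. (\<forall>v\<in>S. pt v = pt' v) \<Longrightarrow> f pt = f pt'"
    using assms unfolding finitely_dependent_def by blast
  have "pd v f pt = pd v f pt'" if "\<forall>w\<in>S. pt w = pt' w" for pt pt'
  proof (cases "v \<in> S")
    case True
    have "(\<lambda>t. f (pt(v := t))) = (\<lambda>t. f (pt'(v := t)))"
      using that by (intro ext S(2)) auto
    moreover have "pt v = pt' v" using True that by auto
    ultimately show ?thesis unfolding pd_def by simp
  next
    case False
    then have "pd v f = (\<lambda>pt. 0)" by (intro pd_indep[of S]) (use S(2) in auto)
    then show ?thesis by simp
  qed
  then show ?thesis using S(1) unfolding finitely_dependent_def by blast
qed

lemma finitely_dependent_const: "finitely_dependent (\<lambda>pt. c)"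
  unfolding finitely_dependent_def by auto

lemma finitely_dependent_coord: "finitely_dependent (\<lambda>pt. pt w)"
  unfolding finitely_dependent_def by (rule exI[of _ "{w}"]) auto

lemma finitely_dependent_binop:
  assumes "finitely_dependent f" "finitely_dependent g"
  shows "finitely_dependent (\<lambda>pt. h (f pt) (g pt))"
proof -
  obtain S T where S: "finite S" "\<And>pt pt'. (\<forall>v\<in>S. pt v = pt' v) \<Longrightarrow> f pt = f pt'"
    and T: "finite T" "\<And>pt pt'. (\<forall>v\<in>T. pt v = pt' v) \<Longrightarrow> g pt = g pt'"
    using assms unfolding finitely_dependent_def by blast
  have "h (f pt) (g pt) = h (f pt') (g pt')" if "\<forall>v\<in>S \<union> T. pt v = pt' v" for pt pt'
    using S(2)[of pt pt'] T(2)[of pt pt'] that by auto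
  then show ?thesis unfolding finitely_dependent_def using S(1) T(1) by (metis finite_UnI)
qed

(* The iterated partial derivatives of f and g generate an algebra of regular functions that is
   closed under partial derivatives; f + g and f * g lie in it. *)
lemma smooth_jet_binop:
  assumes f: "smooth_jet f" and g: "smooth_jet g"
    and h: "\<And>F. generated_by F f \<Longrightarrow> generated_by F g \<Longrightarrow> generated_by F h"
    and "finitely_dependent h"
  shows "smooth_jet h"
proof -
  let ?F = "range (\<lambda>vs. pds vs f) \<union> range (\<lambda>vs. pds vs g)"
  have pd_closed: "pd v (pds vs k) = pds (v # vs) k" for v vs k by simp
  have F: "\<And>k. k \<in> ?F \<Longrightarrow> jet_regular k \<and> (\<forall>v. pd v k \<in> ?F)"
    using f g unfolding smooth_jet_iff by (auto simp del: pds.simps simp: pd_closed)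
  have "f \<in> ?F" "g \<in> ?F" by (auto intro: range_eqI[of _ _ "[]"])
  then have "generated_by ?F h" by (intro h generated_by_base)
  then show ?thesis using generated_by_pds[OF F] assms(4) unfolding smooth_jet_iff by blast
qed

lemma smooth_jet_add: "smooth_jet f \<Longrightarrow> smooth_jet g \<Longrightarrow> smooth_jet (\<lambda>pt. f pt + g pt)"
  by (rule smooth_jet_binop[where f=f and g=g])
    (auto intro: generated_by_add finitely_dependent_binop simp: smooth_jet_iff)

lemma smooth_jet_mult: "smooth_jet f \<Longrightarrow> smooth_jet g \<Longrightarrow> smooth_jet (\<lambda>pt. f pt * g pt)"
  by (rule smooth_jet_binop[where f=f and g=g])
    (auto intro: generated_by_mult finitely_dependent_binop simp: smooth_jet_iff)

lemma pds_const: "pds vs (\<lambda>pt. c) = (if vs = [] then (\<lambda>pt. c) else (\<lambda>pt. 0))"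
  by (induction vs) (auto simp: pd_const)

lemma smooth_jet_const: "smooth_jet (\<lambda>pt. c)"
  unfolding smooth_jet_iff by (auto simp: finitely_dependent_const pds_const jet_regular_const)

lemma pds_coord: "pds vs (\<lambda>pt. pt w) = (\<lambda>pt. pt w) \<or> (\<exists>c. pds vs (\<lambda>pt. pt w) = (\<lambda>pt. c))"
  by (induction vs) (auto simp: pd_coord pd_const)

lemma smooth_jet_coord: "smooth_jet (\<lambda>pt. pt w)"
  unfolding smooth_jet_iff
  using pds_coord[of _ w] jet_regular_coord jet_regular_const finitely_dependent_coord by metis

lemma smooth_jet_pd: "smooth_jet f \<Longrightarrow> smooth_jet (pd v f)"
proof -
  assume "smooth_jet f"
  then have f: "finitely_dependent f" "\<forall>vs. jet_regular (pds vs f)"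
    by (simp_all add: smooth_jet_iff)
  have "pds vs (pd v f) = pds (vs @ [v]) f" for vs by (induction vs) auto
  then show ?thesis using finitely_dependent_pd[OF f(1)] f(2) unfolding smooth_jet_iff by auto
qed

lemma smooth_jet_imp_jet_regular: "smooth_jet f \<Longrightarrow> jet_regular f"
  unfolding smooth_jet_iff by (metis pds.simps(1))

lemma smooth_jet_diff: "smooth_jet f \<Longrightarrow> smooth_jet g \<Longrightarrow> smooth_jet (\<lambda>pt. f pt - g pt)"
  using smooth_jet_add[OF _ smooth_jet_mult[OF smooth_jet_const[of "-1"]]] by simp

lemma smooth_jet_sum:
  "finite I \<Longrightarrow> (\<And>i. i \<in> I \<Longrightarrow> smooth_jet (f i)) \<Longrightarrow> smooth_jet (\<lambda>pt. \<Sum>i\<in>I. f i pt)"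
  by (induction I rule: finite_induct) (auto intro: smooth_jet_add smooth_jet_const)

section \<open>Total derivatives\<close>

definition total_deriv :: "jvar \<Rightarrow> (nat \<times> nat \<Rightarrow> nat \<times> nat) \<Rightarrow> jfun \<Rightarrow> jfun" where
  "total_deriv w sh f = (\<lambda>pt. pd w f pt +
      sum (\<lambda>s. pt (JU (sh s)) * pd (JU s) f pt) {s. pd (JU s) f \<noteq> (\<lambda>_. 0)})"

definition step :: "bool \<Rightarrow> nat \<times> nat \<Rightarrow> nat \<times> nat" where
  "step b s = (if b then (fst s + 1, snd s) else (fst s, snd s + 1))"

definition Dxy :: "bool \<Rightarrow> jfun \<Rightarrow> jfun" where
  "Dxy b = (if b then DX else DY)"

lemma Dxy_total_deriv: "Dxy b = total_deriv (if b then JX else JY) (step b)"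
  by (simp add: fun_eq_iff Dxy_def DX_def DY_def total_deriv_def step_def)

lemma DX_eq_Dxy: "DX = Dxy True" and DY_eq_Dxy: "DY = Dxy False"
  by (simp_all add: Dxy_def)

lemma smooth_jet_pd_JU_support:
  assumes "smooth_jet f"
  obtains T where "finite T" "\<forall>s. s \<notin> T \<longrightarrow> pd (JU s) f = (\<lambda>_. 0)"
proof -
  obtain S where S: "finite S" "\<And>pt pt'. (\<forall>v\<in>S. pt v = pt' v) \<Longrightarrow> f pt = f pt'"
    using assms unfolding smooth_jet_iff finitely_dependent_def by blast
  have "finite (JU -` S)" using S(1) by (rule finite_vimageI) (simp add: inj_on_def)
  moreover have "pd (JU s) f = (\<lambda>_. 0)" if "s \<notin> JU -` S" for s
    using that by (intro pd_indep[of S]) (use S(2) in auto)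
  ultimately show ?thesis using that by blast
qed

lemma total_deriv_eq:
  assumes "finite T" "\<forall>s. s \<notin> T \<longrightarrow> pd (JU s) f = (\<lambda>_. 0)"
  shows "total_deriv w sh f = (\<lambda>pt. pd w f pt + (\<Sum>s\<in>T. pt (JU (sh s)) * pd (JU s) f pt))"
proof
  fix pt
  have "{s. pd (JU s) f \<noteq> (\<lambda>_. 0)} \<subseteq> T" using assms(2) by blast
  then have "(\<Sum>s\<in>{s. pd (JU s) f \<noteq> (\<lambda>_. 0)}. pt (JU (sh s)) * pd (JU s) f pt)
      = (\<Sum>s\<in>T. pt (JU (sh s)) * pd (JU s) f pt)"
    by (intro sum.mono_neutral_left[OF assms(1)]) auto
  then show "total_deriv w sh f pt = pd w f pt + (\<Sum>s\<in>T. pt (JU (sh s)) * pd (JU s) f pt)"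
    unfolding total_deriv_def by simp
qed

lemma smooth_jet_total_deriv:
  assumes "smooth_jet f" shows "smooth_jet (total_deriv w sh f)"
proof -
  obtain T where T: "finite T" "\<forall>s. s \<notin> T \<longrightarrow> pd (JU s) f = (\<lambda>_. 0)"
    using smooth_jet_pd_JU_support[OF assms] by blast
  show ?thesis unfolding total_deriv_eq[OF T]
    by (intro smooth_jet_add smooth_jet_pd assms smooth_jet_sum T(1) smooth_jet_mult smooth_jet_coord)
qed

lemma common_pd_JU_support:
  assumes "smooth_jet f" "smooth_jet g"
  obtains T where "finite T" "\<forall>s. s \<notin> T \<longrightarrow> pd (JU s) f = (\<lambda>_. 0)"
    "\<forall>s. s \<notin> T \<longrightarrow> pd (JU s) g = (\<lambda>_. 0)"
proof -
  obtain T1 where "finite T1" "\<forall>s. s \<notin> T1 \<longrightarrow> pd (JU s) f = (\<lambda>_. 0)"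
    using smooth_jet_pd_JU_support[OF assms(1)] by blast
  moreover obtain T2 where "finite T2" "\<forall>s. s \<notin> T2 \<longrightarrow> pd (JU s) g = (\<lambda>_. 0)"
    using smooth_jet_pd_JU_support[OF assms(2)] by blast
  ultimately show ?thesis using that[of "T1 \<union> T2"] by blast
qed

lemma total_deriv_add:
  assumes f: "smooth_jet f" and g: "smooth_jet g"
  shows "total_deriv w sh (\<lambda>pt. f pt + g pt) = (\<lambda>pt. total_deriv w sh f pt + total_deriv w sh g pt)"
proof -
  obtain T where T: "finite T" "\<forall>s. s \<notin> T \<longrightarrow> pd (JU s) f = (\<lambda>_. 0)"
    "\<forall>s. s \<notin> T \<longrightarrow> pd (JU s) g = (\<lambda>_. 0)"
    using common_pd_JU_support[OF f g] by blast
  have pd_sum: "pd v (\<lambda>pt. f pt + g pt) = (\<lambda>pt. pd v f pt + pd v g pt)" for v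
    using pd_add smooth_jet_imp_jet_regular f g by blast
  have h: "\<forall>s. s \<notin> T \<longrightarrow> pd (JU s) (\<lambda>pt. f pt + g pt) = (\<lambda>_. 0)"
    using T by (simp add: pd_sum)
  show ?thesis
    unfolding total_deriv_eq[OF T(1,2)] total_deriv_eq[OF T(1,3)] total_deriv_eq[OF T(1) h] pd_sum
    by (simp add: fun_eq_iff sum.distrib distrib_left)
qed

lemma total_deriv_mult:
  assumes f: "smooth_jet f" and g: "smooth_jet g"
  shows "total_deriv w sh (\<lambda>pt. f pt * g pt)
    = (\<lambda>pt. total_deriv w sh f pt * g pt + f pt * total_deriv w sh g pt)"
proof -
  obtain T where T: "finite T" "\<forall>s. s \<notin> T \<longrightarrow> pd (JU s) f = (\<lambda>_. 0)"
    "\<forall>s. s \<notin> T \<longrightarrow> pd (JU s) g = (\<lambda>_. 0)"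
    using common_pd_JU_support[OF f g] by blast
  have pd_prod: "pd v (\<lambda>pt. f pt * g pt) = (\<lambda>pt. pd v f pt * g pt + f pt * pd v g pt)" for v
    using pd_mult smooth_jet_imp_jet_regular f g by blast
  have h: "\<forall>s. s \<notin> T \<longrightarrow> pd (JU s) (\<lambda>pt. f pt * g pt) = (\<lambda>_. 0)"
    using T by (simp add: pd_prod)
  show ?thesis
    unfolding total_deriv_eq[OF T(1,2)] total_deriv_eq[OF T(1,3)] total_deriv_eq[OF T(1) h] pd_prod
    by (simp add: fun_eq_iff algebra_simps sum.distrib sum_distrib_left sum_distrib_right)
qed

lemma total_deriv_const: "total_deriv w sh (\<lambda>pt. c) = (\<lambda>pt. 0)"
  using total_deriv_eq[of "{}" "\<lambda>pt. c" w sh] by (simp add: pd_const)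

lemma total_deriv_coord:
  "total_deriv w sh (\<lambda>pt. pt v)
    = (\<lambda>pt. (if w = v then 1 else 0) + (case v of JU s \<Rightarrow> pt (JU (sh s)) | _ \<Rightarrow> 0))"
proof -
  have "finite {s. JU s = v}" by (cases v) auto
  then have "total_deriv w sh (\<lambda>pt. pt v) = (\<lambda>pt. pd w (\<lambda>pt. pt v) pt +
         (\<Sum>s\<in>{s. JU s = v}. pt (JU (sh s)) * pd (JU s) (\<lambda>pt. pt v) pt))"
    by (rule total_deriv_eq) (auto simp: pd_coord)
  moreover have "{s. JU s = v} = (case v of JU s \<Rightarrow> {s} | _ \<Rightarrow> {})" by (cases v) auto
  ultimately show ?thesis by (cases v) (auto simp: pd_coord)
qed

lemma total_deriv_cmult:
  "smooth_jet f \<Longrightarrow> total_deriv w sh (\<lambda>pt. a * f pt) = (\<lambda>pt. a * total_deriv w sh f pt)"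
  using total_deriv_mult[OF smooth_jet_const[of a], of f w sh] by (simp add: total_deriv_const)

lemma total_deriv_diff:
  assumes "smooth_jet f" "smooth_jet g"
  shows "total_deriv w sh (\<lambda>pt. f pt - g pt) = (\<lambda>pt. total_deriv w sh f pt - total_deriv w sh g pt)"
  using total_deriv_add[OF assms(1) smooth_jet_mult[OF smooth_jet_const[of "-1"] assms(2)], of w sh]
    total_deriv_cmult[OF assms(2), of w sh "-1"]
  by simp

lemma total_deriv_sum:
  "finite I \<Longrightarrow> (\<And>i. i \<in> I \<Longrightarrow> smooth_jet (f i)) \<Longrightarrow>
   total_deriv w sh (\<lambda>pt. \<Sum>i\<in>I. f i pt) = (\<lambda>pt. \<Sum>i\<in>I. total_deriv w sh (f i) pt)"
  by (induction I rule: finite_induct) (simp_all add: total_deriv_const total_deriv_add smooth_jet_sum)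

lemma smooth_jet_Dxy: "smooth_jet f \<Longrightarrow> smooth_jet (Dxy b f)"
  unfolding Dxy_total_deriv by (rule smooth_jet_total_deriv)

lemmas Dxy_add =
  total_deriv_add[where w="if b then JX else JY" and sh="step b", folded Dxy_total_deriv] for b
lemmas Dxy_mult =
  total_deriv_mult[where w="if b then JX else JY" and sh="step b", folded Dxy_total_deriv] for b
lemmas Dxy_const =
  total_deriv_const[where w="if b then JX else JY" and sh="step b", folded Dxy_total_deriv] for b
lemmas Dxy_cmult =
  total_deriv_cmult[where w="if b then JX else JY" and sh="step b", folded Dxy_total_deriv] for b
lemmas Dxy_diff =
  total_deriv_diff[where w="if b then JX else JY" and sh="step b", folded Dxy_total_deriv] for b
lemmas Dxy_sum =
  total_deriv_sum[where w="if b then JX else JY" and sh="step b", folded Dxy_total_deriv] for b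

lemma Dxy_coord_JU: "Dxy b (\<lambda>pt. pt (JU s)) = (\<lambda>pt. pt (JU (step b s)))"
  unfolding Dxy_total_deriv total_deriv_coord by simp

fun Dword :: "bool list \<Rightarrow> jfun \<Rightarrow> jfun" where
  "Dword [] f = f"
| "Dword (b # bs) f = Dword bs (Dxy b f)"

lemma Dword_add:
  "smooth_jet f \<Longrightarrow> smooth_jet g \<Longrightarrow> Dword bs (\<lambda>pt. f pt + g pt) = (\<lambda>pt. Dword bs f pt + Dword bs g pt)"
  by (induction bs arbitrary: f g) (auto simp: Dxy_add smooth_jet_Dxy)

lemma Dword_cmult: "smooth_jet f \<Longrightarrow> Dword bs (\<lambda>pt. a * f pt) = (\<lambda>pt. a * Dword bs f pt)"
  by (induction bs arbitrary: f) (auto simp: Dxy_cmult smooth_jet_Dxy)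

lemma Dword_diff:
  "smooth_jet f \<Longrightarrow> smooth_jet g \<Longrightarrow> Dword bs (\<lambda>pt. f pt - g pt) = (\<lambda>pt. Dword bs f pt - Dword bs g pt)"
  by (induction bs arbitrary: f g) (auto simp: Dxy_diff smooth_jet_Dxy)

lemma Dword_zero: "Dword bs (\<lambda>_. 0) = (\<lambda>_. 0)"
  by (induction bs) (auto simp: Dxy_const)

section \<open>Syzygies of the prolonged Laplace equation\<close>

definition Fprol :: "nat \<times> nat \<Rightarrow> jfun" where
  "Fprol s = (\<lambda>pt. pt (JU (fst s + 2, snd s)) + pt (JU (fst s, snd s + 2)))"

lemma smooth_jet_Fprol: "smooth_jet (Fprol s)"
  unfolding Fprol_def by (intro smooth_jet_add smooth_jet_coord)

lemma Dxy_Fprol: "Dxy b (Fprol s) = Fprol (step b s)"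
  unfolding Fprol_def by (simp add: Dxy_add smooth_jet_coord Dxy_coord_JU) (simp add: step_def)

lemma Dm_Flap: "Dm s Flap = Fprol s"
proof -
  have "(DY ^^ j) Flap = Fprol (0, j)" for j
  proof (induction j)
    case 0
    then show ?case by (simp add: Flap_def Fprol_def numeral_2_eq_2)
  next
    case (Suc j)
    then show ?case by (simp add: DY_eq_Dxy Dxy_Fprol step_def)
  qed
  moreover have "(DX ^^ i) (Fprol (0, j)) = Fprol (i, j)" for i j
    by (induction i) (simp_all add: DX_eq_Dxy Dxy_Fprol step_def)
  ultimately show ?thesis unfolding Dm_def by simp
qed

lemma onE_Fprol: "onE pt \<Longrightarrow> Fprol s pt = 0"
  unfolding onE_def Fprol_def by (metis add.commute)

definition idx_box :: "nat \<Rightarrow> (nat \<times> nat) set" where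
  "idx_box N = {..N} \<times> {..N}"

lemma finite_idx_box [simp]: "finite (idx_box N)"
  unfolding idx_box_def by simp

lemma idx_box_mono: "idx_box N \<subseteq> idx_box (Suc N)"
  unfolding idx_box_def by auto

lemma finite_subset_idx_box:
  assumes "finite (A :: (nat \<times> nat) set)" obtains N where "A \<subseteq> idx_box N"
proof -
  obtain N1 N2 where "\<forall>x\<in>fst ` A. x \<le> N1" "\<forall>x\<in>snd ` A. x \<le> N2"
    using assms finite_nat_set_iff_bounded_le by (meson finite_imageI)
  then have "A \<subseteq> idx_box (max N1 N2)" unfolding idx_box_def by force
  then show ?thesis using that by blast
qed

definition syzygy :: "(nat \<times> nat \<Rightarrow> jfun) \<Rightarrow> nat \<Rightarrow> bool" where
  "syzygy d N \<longleftrightarrow> (\<forall>s. smooth_jet (d s)) \<and> (\<forall>s. s \<notin> idx_box N \<longrightarrow> d s = (\<lambda>_. 0)) \<and>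
     (\<forall>pt. (\<Sum>s\<in>idx_box N. d s pt * Fprol s pt) = 0)"

definition alt_sign :: "nat \<Rightarrow> nat \<Rightarrow> real" where
  "alt_sign i0 a = (if a \<le> i0 \<and> even (i0 - a) then (-1) ^ ((i0 - a) div 2) else 0)"

lemma alt_sign_step: "alt_sign i0 (i + 2) + alt_sign i0 i = (if i = i0 then 1 else 0)"
proof (cases "i + 2 \<le> i0")
  case True
  then obtain k where i0: "i0 = i + 2 + k" using le_Suc_ex by blast
  have "(k + 2) div 2 = Suc (k div 2)" by simp
  then show ?thesis unfolding alt_sign_def i0 by (simp add: add.commute[of 2])
next
  case False
  then have "i0 = i + 1 \<or> i0 \<le> i" by auto
  then show ?thesis unfolding alt_sign_def by auto
qed

(* Alternating signs along the antidiagonal |a| = |s0| + 2: the contributions to D_s(F) cancel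
   in pairs except for s = s0, so moving along this direction isolates one coefficient of a
   syzygy. *)
definition transversal :: "nat \<times> nat \<Rightarrow> jvar \<Rightarrow> real" where
  "transversal s0 v = (case v of
      JU ab \<Rightarrow> if fst ab + snd ab = fst s0 + snd s0 + 2 then alt_sign (fst s0) (fst ab) else 0
    | _ \<Rightarrow> 0)"

lemma Fprol_transversal:
  assumes "onE pt"
  shows "Fprol s (\<lambda>v. pt v + t * transversal s0 v) = (if s = s0 then t else 0)"
proof -
  have "Fprol s (\<lambda>v. pt v + t * transversal s0 v) = Fprol s pt +
        t * (transversal s0 (JU (fst s + 2, snd s)) + transversal s0 (JU (fst s, snd s + 2)))"
    unfolding Fprol_def by (simp add: algebra_simps)
  moreover have "transversal s0 (JU (fst s + 2, snd s)) + transversal s0 (JU (fst s, snd s + 2))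
      = (if s = s0 then 1 else 0)"
  proof (cases "fst s + snd s = fst s0 + snd s0")
    case True
    then have "s = s0 \<longleftrightarrow> fst s = fst s0" by (metis add_left_cancel prod.expand)
    then show ?thesis using True alt_sign_step[of "fst s0" "fst s"]
      unfolding transversal_def by simp
  next
    case False
    then have "s \<noteq> s0" by auto
    then show ?thesis using False unfolding transversal_def by simp
  qed
  ultimately show ?thesis using onE_Fprol[OF assms] by simp
qed

lemma syzygy_vanishes_on_E:
  assumes syz: "syzygy d N" and E: "onE pt"
  shows "d s0 pt = 0"
proof (cases "s0 \<in> idx_box N")
  case False
  then have "d s0 = (\<lambda>_. 0)" using syz unfolding syzygy_def by blast
  then show ?thesis by simp
next
  case True
  define q where "q t = (\<lambda>v. pt v + t * transversal s0 v)" for t :: real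
  define g where "g t = d s0 (q t)" for t
  have g_0: "g t = 0" if "t \<noteq> 0" for t
  proof -
    have "0 = (\<Sum>s\<in>idx_box N. d s (q t) * Fprol s (q t))" using syz unfolding syzygy_def by auto
    also have "\<dots> = (\<Sum>s\<in>idx_box N. if s = s0 then t * d s (q t) else 0)"
      unfolding q_def Fprol_transversal[OF E] by (intro sum.cong) auto
    also have "\<dots> = t * g t" using True by (simp add: g_def)
    finally show ?thesis using that by simp
  qed
  have "continuous_on UNIV q"
    unfolding q_def by (intro continuous_on_coordinatewise_then_product continuous_intros)
  moreover have "continuous_on UNIV (d s0)"
    using syz smooth_jet_imp_jet_regular unfolding syzygy_def jet_regular_def by blast
  ultimately have "continuous_on UNIV g"
    unfolding g_def using continuous_on_compose2 by fastforce
  then have "(g \<longlongrightarrow> g 0) (at 0)" by (simp add: continuous_on_def)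
  moreover have "(g \<longlongrightarrow> 0) (at 0)"
    by (rule tendsto_eventually) (simp add: eventually_at_filter g_0)
  ultimately have "g 0 = 0" using tendsto_unique[OF at_neq_bot] by blast
  then show ?thesis by (simp add: g_def q_def)
qed

definition has_pred :: "bool \<Rightarrow> nat \<times> nat \<Rightarrow> bool" where
  "has_pred b s = (if b then 0 < fst s else 0 < snd s)"

definition pred_idx :: "bool \<Rightarrow> nat \<times> nat \<Rightarrow> nat \<times> nat" where
  "pred_idx b s = (if b then (fst s - 1, snd s) else (fst s, snd s - 1))"

lemma step_eq_iff: "step b t = s \<longleftrightarrow> has_pred b s \<and> t = pred_idx b s"
  by (cases s; cases t) (auto simp: step_def has_pred_def pred_idx_def)

lemma inj_step: "inj (step b)"
  by (metis injI step_eq_iff)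

definition unshift :: "bool \<Rightarrow> (nat \<times> nat \<Rightarrow> jfun) \<Rightarrow> nat \<times> nat \<Rightarrow> jfun" where
  "unshift b d s = (if has_pred b s then d (pred_idx b s) else (\<lambda>_. 0))"

lemma unshift_step: "unshift b d (step b t) = d t"
  using step_eq_iff[of b t "step b t"] by (simp add: unshift_def)

lemma step_idx_box: "t \<in> idx_box N \<Longrightarrow> step b t \<in> idx_box (Suc N)"
  by (auto simp: step_def idx_box_def)

lemma unshift_cases:
  obtains "unshift b d s = (\<lambda>_. 0)" | t where "s = step b t" "unshift b d s = d t"
  using step_eq_iff[of b _ s] unfolding unshift_def by metis

lemma smooth_jet_unshift: "(\<And>t. smooth_jet (d t)) \<Longrightarrow> smooth_jet (unshift b d s)"
  by (cases rule: unshift_cases[of b d s]) (simp_all add: smooth_jet_const)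

lemma unshift_outside:
  assumes "\<forall>s. s \<notin> idx_box N \<longrightarrow> d s = (\<lambda>_. 0)" "s \<notin> step b ` idx_box N"
  shows "unshift b d s = (\<lambda>_. 0)"
proof (cases rule: unshift_cases[of b d s])
  case (2 t)
  then have "t \<notin> idx_box N" using assms(2) by blast
  then have "d t = (\<lambda>_. 0)" using assms(1) by blast
  then show ?thesis using 2 by simp
qed

lemma sum_unshift:
  assumes "\<forall>s. s \<notin> idx_box N \<longrightarrow> d s = (\<lambda>_. 0)"
  shows "(\<Sum>s\<in>idx_box (Suc N). unshift b d s pt * Fprol s pt)
       = (\<Sum>s\<in>idx_box N. d s pt * Fprol (step b s) pt)"
proof -
  have "(\<Sum>s\<in>idx_box N. d s pt * Fprol (step b s) pt)
      = (\<Sum>s\<in>step b ` idx_box N. unshift b d s pt * Fprol s pt)"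
    by (simp add: sum.reindex inj_on_subset[OF inj_step] unshift_step)
  also have "\<dots> = (\<Sum>s\<in>idx_box (Suc N). unshift b d s pt * Fprol s pt)"
  proof (rule sum.mono_neutral_left)
    show "step b ` idx_box N \<subseteq> idx_box (Suc N)" using step_idx_box by blast
    show "\<forall>s\<in>idx_box (Suc N) - step b ` idx_box N. unshift b d s pt * Fprol s pt = 0"
      using unshift_outside[OF assms] by simp
  qed simp
  finally show ?thesis by simp
qed

(* D(sum_s d_s D_s(F)) = sum_s D(d_s) D_s(F) + d_s D(D_s(F)), and reindexing the second sum turns
   its coefficients into unshifted ones. *)
lemma syzygy_Dxy:
  assumes "syzygy d N"
  shows "syzygy (\<lambda>s pt. Dxy b (d s) pt + unshift b d s pt) (Suc N)"
proof -
  have smooth: "\<And>s. smooth_jet (d s)" and supp: "\<forall>s. s \<notin> idx_box N \<longrightarrow> d s = (\<lambda>_. 0)"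
    and rel: "(\<lambda>pt. \<Sum>s\<in>idx_box N. d s pt * Fprol s pt) = (\<lambda>_. 0)"
    using assms unfolding syzygy_def by auto
  have "(\<lambda>pt. \<Sum>s\<in>idx_box N. Dxy b (d s) pt * Fprol s pt + d s pt * Fprol (step b s) pt)
      = (\<lambda>pt. \<Sum>s\<in>idx_box N. Dxy b (\<lambda>pt. d s pt * Fprol s pt) pt)"
    by (simp add: Dxy_mult[OF smooth smooth_jet_Fprol] Dxy_Fprol)
  also have "\<dots> = Dxy b (\<lambda>pt. \<Sum>s\<in>idx_box N. d s pt * Fprol s pt)"
    by (rule Dxy_sum[symmetric]) (auto intro: smooth_jet_mult smooth smooth_jet_Fprol)
  also have "\<dots> = (\<lambda>_. 0)" unfolding rel by (simp add: Dxy_const)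
  finally have rel': "(\<Sum>s\<in>idx_box N. Dxy b (d s) pt * Fprol s pt + d s pt * Fprol (step b s) pt) = 0"
    for pt by (metis (no_types))
  have "(\<Sum>s\<in>idx_box (Suc N). (Dxy b (d s) pt + unshift b d s pt) * Fprol s pt) = 0" for pt
  proof -
    have "(\<Sum>s\<in>idx_box (Suc N). Dxy b (d s) pt * Fprol s pt)
        = (\<Sum>s\<in>idx_box N. Dxy b (d s) pt * Fprol s pt)"
      by (rule sum.mono_neutral_right[OF finite_idx_box idx_box_mono]) (use supp Dxy_const in auto)
    then show ?thesis
      using rel'[of pt] sum_unshift[OF supp, of b pt] by (simp add: distrib_right sum.distrib)
  qed
  moreover have "Dxy b (d s) = (\<lambda>_. 0)" if "s \<notin> idx_box (Suc N)" for s
    using that supp idx_box_mono Dxy_const by (metis subsetD)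
  moreover have "unshift b d s = (\<lambda>_. 0)" if "s \<notin> idx_box (Suc N)" for s
  proof (rule unshift_outside[OF supp])
    show "s \<notin> step b ` idx_box N" using that step_idx_box by blast
  qed
  ultimately show ?thesis
    unfolding syzygy_def using smooth
      by (simp add: smooth_jet_add smooth_jet_Dxy smooth_jet_unshift)
qed

lemma syzygy_Dword:
  assumes "syzygy d N" "onE pt"
  shows "Dword bs (d s) pt = 0"
  using assms(1)
proof (induction bs arbitrary: d N s)
  case Nil
  then show ?case using syzygy_vanishes_on_E[OF _ assms(2)] by simp
next
  case (Cons b bs)
  let ?d' = "\<lambda>s pt. Dxy b (d s) pt + unshift b d s pt"
  have smooth: "smooth_jet (d s)" for s using Cons.prems unfolding syzygy_def by blast
  then have smooth_unshift: "smooth_jet (unshift b d s)" for s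
    by (rule smooth_jet_unshift)
  have "Dword bs (Dxy b (d s)) = Dword bs (\<lambda>pt. ?d' s pt - unshift b d s pt)" by simp
  also have "\<dots> = (\<lambda>pt. Dword bs (?d' s) pt - Dword bs (unshift b d s) pt)"
    by (intro Dword_diff smooth_jet_add smooth_jet_Dxy smooth smooth_unshift)
  finally have "Dword (b # bs) (d s) pt = Dword bs (?d' s) pt - Dword bs (unshift b d s) pt"
    by simp
  moreover have "Dword bs (?d' s) pt = 0" using Cons.IH[OF syzygy_Dxy[OF Cons.prems]] .
  moreover have "Dword bs (unshift b d s) pt = 0"
    using Cons.IH[OF Cons.prems] by (cases rule: unshift_cases[of b d s]) (simp_all add: Dword_zero)
  ultimately show ?case by simp
qed

section \<open>The bracket does not depend on the choice of \<open>\<nabla>\<close>\<close>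

definition agree_on_E :: "jfun \<Rightarrow> jfun \<Rightarrow> bool" where
  "agree_on_E f g \<longleftrightarrow> smooth_jet f \<and> smooth_jet g \<and> (\<forall>bs pt. onE pt \<longrightarrow> Dword bs f pt = Dword bs g pt)"

lemma agree_on_E_refl: "smooth_jet f \<Longrightarrow> agree_on_E f f"
  unfolding agree_on_E_def by simp

lemma agree_on_E_zero: "agree_on_E (\<lambda>_. 0) (\<lambda>_. 0)"
  by (rule agree_on_E_refl) (rule smooth_jet_const)

lemma agree_on_E_add:
  "agree_on_E f g \<Longrightarrow> agree_on_E f' g' \<Longrightarrow> agree_on_E (\<lambda>pt. f pt + f' pt) (\<lambda>pt. g pt + g' pt)"
  unfolding agree_on_E_def by (auto simp: Dword_add smooth_jet_add)

lemma agree_on_E_cmult: "agree_on_E f g \<Longrightarrow> agree_on_E (\<lambda>pt. a * f pt) (\<lambda>pt. a * g pt)"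
  unfolding agree_on_E_def by (auto simp: Dword_cmult smooth_jet_mult smooth_jet_const)

lemma agree_on_E_sum:
  "finite I \<Longrightarrow> (\<And>i. i \<in> I \<Longrightarrow> agree_on_E (f i) (g i)) \<Longrightarrow>
   agree_on_E (\<lambda>pt. \<Sum>i\<in>I. f i pt) (\<lambda>pt. \<Sum>i\<in>I. g i pt)"
  by (induction I rule: finite_induct) (simp_all add: agree_on_E_zero agree_on_E_add)

lemma agree_on_E_Dxy: "agree_on_E f g \<Longrightarrow> agree_on_E (Dxy b f) (Dxy b g)"
  unfolding agree_on_E_def by (metis Dword.simps(2) smooth_jet_Dxy)

lemma agree_on_E_if:
  "(C \<Longrightarrow> agree_on_E f g) \<Longrightarrow> agree_on_E (\<lambda>pt. if C then f pt else 0) (\<lambda>pt. if C then g pt else 0)"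
  by (cases C) (simp_all add: agree_on_E_zero)

lemma agree_on_E_imp_eq: "agree_on_E f g \<Longrightarrow> onE pt \<Longrightarrow> f pt = g pt"
  unfolding agree_on_E_def by (metis Dword.simps(1))

definition qagree_on_E :: "quad \<Rightarrow> quad \<Rightarrow> bool" where
  "qagree_on_E q q' \<longleftrightarrow> (\<forall>r k. agree_on_E (q r k) (q' r k))"

definition QDxy :: "bool \<Rightarrow> quad \<Rightarrow> quad" where
  "QDxy b q = (\<lambda>r k pt. Dxy b (q r k) pt + unshift b (\<lambda>r. q r k) r pt + unshift b (q r) k pt)"

lemma QDX_QDY_eq_QDxy: "QDX = QDxy True" "QDY = QDxy False"
  by (simp_all add: fun_eq_iff QDX_def QDY_def QDxy_def Dxy_def unshift_def has_pred_def pred_idx_def)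

lemma QD_QDxy: "QD s q = (QDxy True ^^ fst s) ((QDxy False ^^ snd s) q)"
  by (simp add: QD_def QDX_QDY_eq_QDxy)

lemma agree_on_E_unshift:
  "(\<And>t. agree_on_E (d t) (d' t)) \<Longrightarrow> agree_on_E (unshift b d s) (unshift b d' s)"
  by (simp add: unshift_def agree_on_E_zero)

lemma qagree_on_E_QD: "qagree_on_E q q' \<Longrightarrow> qagree_on_E (QD s q) (QD s q')"
proof -
  have step: "qagree_on_E (QDxy b q) (QDxy b q')" if "qagree_on_E q q'" for b q q'
    unfolding qagree_on_E_def QDxy_def
  proof (intro allI agree_on_E_add agree_on_E_Dxy agree_on_E_unshift)
    fix r k t
    show "agree_on_E (q r k) (q' r k)" "agree_on_E (q t k) (q' t k)" "agree_on_E (q r t) (q' r t)"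
      using that unfolding qagree_on_E_def by blast+
  qed
  have "qagree_on_E ((QDxy b ^^ n) q) ((QDxy b ^^ n) q')" if "qagree_on_E q q'" for b n q q'
    using that by (induction n) (simp_all add: step)
  then show "qagree_on_E q q' \<Longrightarrow> qagree_on_E (QD s q) (QD s q')"
    unfolding QD_QDxy by blast
qed

lemma funpow_fixed_point: "f x = x \<Longrightarrow> (f ^^ n) x = x"
  by (induction n) auto

lemma QD_zero: "QD s (\<lambda>r k pt. 0) = (\<lambda>r k pt. 0)"
proof -
  have "QDxy b (\<lambda>r k pt. 0) = (\<lambda>r k pt. 0)" for b
    by (simp add: QDxy_def unshift_def Dxy_const fun_eq_iff)
  then show ?thesis unfolding QD_QDxy by (simp add: funpow_fixed_point)
qed

definition Hp_on :: "(nat \<times> nat \<Rightarrow> nat \<times> nat \<Rightarrow> jfun) \<Rightarrow> (nat \<times> nat) set \<Rightarrow> quad" where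
  "Hp_on c S = (\<lambda>r k pt. - (1/2) * (\<Sum>s\<in>S.
      (-1) ^ (fst s + snd s) *
      QD s (\<lambda>r' k' pt'. if r' = (0,0) then c s k' pt' else 0) r k pt))"

lemma Hp_eq_Hp_on:
  assumes "finite S" "{s. \<exists>t. c s t \<noteq> (\<lambda>_. 0)} \<subseteq> S"
  shows "Hp c = Hp_on c S"
proof (intro ext)
  fix r k pt
  let ?g = "\<lambda>s. (-1) ^ (fst s + snd s) * QD s (\<lambda>r' k' pt'. if r' = (0,0) then c s k' pt' else 0) r k pt"
  have "?g s = 0" if "s \<notin> {s. \<exists>t. c s t \<noteq> (\<lambda>_. 0)}" for s
  proof -
    have e: "(\<lambda>r' k' pt'. if r' = (0,0) then c s k' pt' else 0) = (\<lambda>r k pt. 0)"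
      using that by (auto simp: fun_eq_iff)
    show ?thesis unfolding e QD_zero by simp
  qed
  then have "sum ?g {s. \<exists>t. c s t \<noteq> (\<lambda>_. 0)} = sum ?g S"
    by (intro sum.mono_neutral_left[OF assms]) blast
  then show "Hp c r k pt = Hp_on c S r k pt"
    unfolding Hp_def Hp_on_def by simp
qed

lemma qagree_on_E_Hp_on:
  assumes "finite S" "\<And>s t. agree_on_E (c s t) (c' s t)"
  shows "qagree_on_E (Hp_on c S) (Hp_on c' S)"
  unfolding qagree_on_E_def Hp_on_def
proof (intro allI agree_on_E_cmult agree_on_E_sum[OF assms(1)])
  fix r k s
  have "qagree_on_E (\<lambda>r' k' pt'. if r' = (0,0) then c s k' pt' else 0)
                    (\<lambda>r' k' pt'. if r' = (0,0) then c' s k' pt' else 0)"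
    unfolding qagree_on_E_def using assms(2) by (intro allI agree_on_E_if)
  then have "qagree_on_E (QD s (\<lambda>r' k' pt'. if r' = (0,0) then c s k' pt' else 0))
                         (QD s (\<lambda>r' k' pt'. if r' = (0,0) then c' s k' pt' else 0))"
    by (rule qagree_on_E_QD)
  then show "agree_on_E (QD s (\<lambda>r' k' pt'. if r' = (0,0) then c s k' pt' else 0) r k)
                        (QD s (\<lambda>r' k' pt'. if r' = (0,0) then c' s k' pt' else 0) r k)"
    unfolding qagree_on_E_def by blast
qed

lemma admissible_finite_support:
  assumes "admissible H c"
  shows "finite {s. \<exists>t. c s t \<noteq> (\<lambda>_. 0)}"
proof -
  have "{s. \<exists>t. c s t \<noteq> (\<lambda>_. 0)} = fst ` {(s,t). c s t \<noteq> (\<lambda>_. 0)}" by force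
  then show ?thesis using assms unfolding admissible_def by simp
qed

lemma admissible_smooth: "admissible H c \<Longrightarrow> smooth_jet (c s t)"
  unfolding admissible_def by blast

lemma admissible_sum_idx_box:
  assumes "admissible H c" "{s. \<exists>t. c s t \<noteq> (\<lambda>_. 0)} \<subseteq> idx_box N"
  shows "lapL H k pt - adjL H (lapL pL) k pt = (\<Sum>s\<in>idx_box N. c s k pt * Fprol s pt)"
proof -
  have "lapL H k pt - adjL H (lapL pL) k pt = (\<Sum>s\<in>{s. c s k \<noteq> (\<lambda>_. 0)}. c s k pt * Fprol s pt)"
    using assms(1) unfolding admissible_def Dm_Flap by blast
  also have "\<dots> = (\<Sum>s\<in>idx_box N. c s k pt * Fprol s pt)"
  proof (rule sum.mono_neutral_left[OF finite_idx_box])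
    show "{s. c s k \<noteq> (\<lambda>_. 0)} \<subseteq> idx_box N" using assms(2) by blast
  qed auto
  finally show ?thesis .
qed

lemma admissible_agree_on_E:
  assumes c: "admissible H c" and c': "admissible H c'"
  shows "agree_on_E (c s t) (c' s t)"
proof -
  have "finite ({s. \<exists>t. c s t \<noteq> (\<lambda>_. 0)} \<union> {s. \<exists>t. c' s t \<noteq> (\<lambda>_. 0)})"
    using admissible_finite_support[OF c] admissible_finite_support[OF c'] by simp
  then obtain N where N: "{s. \<exists>t. c s t \<noteq> (\<lambda>_. 0)} \<union> {s. \<exists>t. c' s t \<noteq> (\<lambda>_. 0)} \<subseteq> idx_box N"
    by (rule finite_subset_idx_box)
  let ?d = "\<lambda>s pt. c s t pt - c' s t pt"
  have smooth: "smooth_jet (c s t)" "smooth_jet (c' s t)"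
    using admissible_smooth c c' by auto
  have syz: "syzygy ?d N"
    unfolding syzygy_def
  proof (intro conjI allI impI)
    show "smooth_jet (?d s)" for s
      using admissible_smooth[OF c] admissible_smooth[OF c'] by (rule smooth_jet_diff)
    show "?d s = (\<lambda>_. 0)" if "s \<notin> idx_box N" for s
    proof -
      have "c s t = (\<lambda>_. 0)" "c' s t = (\<lambda>_. 0)" using N that by blast+
      then show ?thesis by simp
    qed
    show "(\<Sum>s\<in>idx_box N. ?d s pt * Fprol s pt) = 0" for pt
      using admissible_sum_idx_box[OF c, of N t pt] admissible_sum_idx_box[OF c', of N t pt] N
      by (simp add: left_diff_distrib sum_subtractf)
  qed
  have "Dword bs (c s t) pt = Dword bs (c' s t) pt" if "onE pt" for bs pt
  proof -
    have "Dword bs (c s t) = (\<lambda>pt. Dword bs (c' s t) pt + Dword bs (?d s) pt)"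
      using Dword_add[OF smooth(2) smooth_jet_diff[OF smooth]] by simp
    then show ?thesis using syzygy_Dword[OF syz that] by simp
  qed
  then show ?thesis unfolding agree_on_E_def using smooth by blast
qed

lemma admissible_qagree_on_E_Hp:
  assumes c: "admissible H c" and c': "admissible H c'"
  shows "qagree_on_E (Hp c) (Hp c')"
proof -
  let ?S = "{s. \<exists>t. c s t \<noteq> (\<lambda>_. 0)} \<union> {s. \<exists>t. c' s t \<noteq> (\<lambda>_. 0)}"
  have "finite ?S" using admissible_finite_support[OF c] admissible_finite_support[OF c'] by simp
  moreover have "Hp c = Hp_on c ?S" "Hp c' = Hp_on c' ?S"
    by (rule Hp_eq_Hp_on[OF \<open>finite ?S\<close>]; blast)+
  ultimately show ?thesis using qagree_on_E_Hp_on admissible_agree_on_E[OF c c'] by simp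
qed

lemma zeroT_Q_cong:
  assumes "\<And>r k pt. onE pt \<Longrightarrow> q r k pt = q' r k pt"
  shows "zeroT_Q q = zeroT_Q q'"
proof -
  have "Qred q ab cd pt = Qred q' ab cd pt" if "onE pt" for ab cd pt
    unfolding Qred_def using assms[OF that] by simp
  then show ?thesis unfolding zeroT_Q_def zeroE_def by simp
qed

lemma schouten_cong:
  assumes "admissible H c" "admissible H c0" "admissible H' c'" "admissible H' c0'"
  shows "zeroT_Q (schouten H c H' c') = zeroT_Q (schouten H c0 H' c0')"
proof (rule zeroT_Q_cong)
  have evq: "evq H c H' r k pt = evq H c0 H' r k pt"
    if "admissible H c" "admissible H c0" "onE pt" for H c c0 H' r k pt
  proof -
    have "QD s (Hp c) r k pt = QD s (Hp c0) r k pt" for s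
      using qagree_on_E_QD[OF admissible_qagree_on_E_Hp[OF that(1,2)], of s] agree_on_E_imp_eq that(3)
      unfolding qagree_on_E_def by blast
    then show ?thesis unfolding evq_def by simp
  qed
  show "schouten H c H' c' r k pt = schouten H c0 H' c0' r k pt" if "onE pt" for r k pt
    unfolding schouten_def using evq[OF assms(1,2) that] evq[OF assms(3,4) that] by simp
qed

section \<open>Symbolic polynomial expressions\<close>

datatype sexpr = PC int | PV jvar | PA sexpr sexpr | PM sexpr sexpr

fun sval :: "sexpr \<Rightarrow> jfun" where
  "sval (PC c) = (\<lambda>pt. of_int c)"
| "sval (PV v) = (\<lambda>pt. pt v)"
| "sval (PA a b) = (\<lambda>pt. sval a pt + sval b pt)"
| "sval (PM a b) = (\<lambda>pt. sval a pt * sval b pt)"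

lemma smooth_jet_sval: "smooth_jet (sval e)"
  by (induction e) (auto intro: smooth_jet_const smooth_jet_coord smooth_jet_add smooth_jet_mult)

(* Constant-folding constructors; they only keep the generated expressions small. *)
fun sadd :: "sexpr \<Rightarrow> sexpr \<Rightarrow> sexpr" where
  "sadd (PC x) (PC y) = PC (x + y)"
| "sadd (PC x) b = (if x = 0 then b else PA (PC x) b)"
| "sadd a (PC y) = (if y = 0 then a else PA a (PC y))"
| "sadd a b = PA a b"

fun smul :: "sexpr \<Rightarrow> sexpr \<Rightarrow> sexpr" where
  "smul (PC x) (PC y) = PC (x * y)"
| "smul (PC x) b = (if x = 0 then PC 0 else if x = 1 then b else PM (PC x) b)"
| "smul a (PC y) = (if y = 0 then PC 0 else if y = 1 then a else PM a (PC y))"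
| "smul a b = PM a b"

lemma sval_sadd: "sval (sadd a b) = (\<lambda>pt. sval a pt + sval b pt)"
  by (induction a b rule: sadd.induct) auto

lemma sval_smul: "sval (smul a b) = (\<lambda>pt. sval a pt * sval b pt)"
  by (induction a b rule: smul.induct) auto

definition sdiff :: "sexpr \<Rightarrow> sexpr \<Rightarrow> sexpr" where
  "sdiff a b = PA a (PM (PC (-1)) b)"

lemma sval_sdiff: "sval (sdiff a b) = (\<lambda>pt. sval a pt - sval b pt)"
  by (simp add: sdiff_def)

lemma sval_foldr_sadd: "sval (foldr (\<lambda>s acc. sadd (f s) acc) xs (PC 0)) pt = (\<Sum>s\<leftarrow>xs. sval (f s) pt)"
  by (induction xs) (auto simp: sval_sadd)

fun stotal_deriv :: "jvar \<Rightarrow> (nat \<times> nat \<Rightarrow> nat \<times> nat) \<Rightarrow> sexpr \<Rightarrow> sexpr" where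
  "stotal_deriv w sh (PC c) = PC 0"
| "stotal_deriv w sh (PV v) =
     (case v of
       JU s \<Rightarrow> if w = v then PA (PC 1) (PV (JU (sh s))) else PV (JU (sh s))
     | _ \<Rightarrow> PC (if w = v then 1 else 0))"
| "stotal_deriv w sh (PA a b) = sadd (stotal_deriv w sh a) (stotal_deriv w sh b)"
| "stotal_deriv w sh (PM a b) = sadd (smul (stotal_deriv w sh a) b) (smul a (stotal_deriv w sh b))"

lemma total_deriv_sval: "total_deriv w sh (sval e) = sval (stotal_deriv w sh e)"
proof (induction e)
  case (PC x)
  then show ?case by (simp add: total_deriv_const)
next
  case (PV v)
  then show ?case by (cases v) (auto simp: total_deriv_coord fun_eq_iff)
next
  case (PA e1 e2)
  then show ?case by (simp add: total_deriv_add smooth_jet_sval sval_sadd)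
next
  case (PM e1 e2)
  then show ?case by (simp add: total_deriv_mult smooth_jet_sval sval_sadd sval_smul)
qed

definition sDxy :: "bool \<Rightarrow> sexpr \<Rightarrow> sexpr" where
  "sDxy b = stotal_deriv (if b then JX else JY) (step b)"

lemma Dxy_sval: "Dxy b (sval e) = sval (sDxy b e)"
  by (simp add: Dxy_total_deriv sDxy_def total_deriv_sval)

fun spd :: "jvar \<Rightarrow> sexpr \<Rightarrow> sexpr" where
  "spd v (PC c) = PC 0"
| "spd v (PV w) = PC (if v = w then 1 else 0)"
| "spd v (PA a b) = sadd (spd v a) (spd v b)"
| "spd v (PM a b) = sadd (smul (spd v a) b) (smul a (spd v b))"

lemma pd_sval: "pd v (sval e) = sval (spd v e)"
proof (induction e)
  case (PC x)
  then show ?case by (simp add: pd_const)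
next
  case (PV w)
  then show ?case by (simp add: pd_coord)
next
  case (PA e1 e2)
  then show ?case by (simp add: pd_add smooth_jet_imp_jet_regular smooth_jet_sval sval_sadd)
next
  case (PM e1 e2)
  then show ?case
    by (simp add: pd_mult smooth_jet_imp_jet_regular smooth_jet_sval sval_sadd sval_smul)
qed

fun svars :: "sexpr \<Rightarrow> jvar list" where
  "svars (PC c) = []"
| "svars (PV v) = [v]"
| "svars (PA a b) = svars a @ svars b"
| "svars (PM a b) = svars a @ svars b"

lemma sval_cong: "(\<forall>v\<in>set (svars e). pt v = pt' v) \<Longrightarrow> sval e pt = sval e pt'"
  by (induction e) auto

lemma pd_sval_eq_0: "v \<notin> set (svars e) \<Longrightarrow> pd v (sval e) = (\<lambda>_. 0)"
  by (rule pd_indep[of "set (svars e)"]) (auto intro: sval_cong)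

fun ju_indices :: "jvar list \<Rightarrow> (nat \<times> nat) list" where
  "ju_indices [] = []"
| "ju_indices (JU s # vs) = s # ju_indices vs"
| "ju_indices (_ # vs) = ju_indices vs"

lemma JU_in_set_iff: "JU s \<in> set vs \<longleftrightarrow> s \<in> set (ju_indices vs)"
  by (induction vs rule: ju_indices.induct) auto

(* Monomials are sorted by var_rank. Soundness of normal_form does not depend on the ranking,
   which only affects whether equal monomials are recognised as such. *)
fun var_rank :: "jvar \<Rightarrow> nat" where
  "var_rank JX = 0"
| "var_rank JY = 1"
| "var_rank (JU s) = 2 + 64 * fst s + snd s"

definition mono_val :: "jvar list \<Rightarrow> jfun" where
  "mono_val m = (\<lambda>pt. prod_list (map pt m))"

lemma mono_val_Nil: "mono_val [] pt = 1" by (simp add: mono_val_def)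
lemma mono_val_Cons: "mono_val (a # m) pt = pt a * mono_val m pt" by (simp add: mono_val_def)

definition mono_mult :: "jvar list \<Rightarrow> jvar list \<Rightarrow> jvar list" where
  "mono_mult m m' = foldr (insort_key var_rank) m m'"

lemma mono_val_insort: "mono_val (insort_key f x m) pt = pt x * mono_val m pt"
  unfolding mono_val_def by (induction m) (auto simp: algebra_simps)

lemma mono_val_mono_mult: "mono_val (mono_mult m m') pt = mono_val m pt * mono_val m' pt"
  unfolding mono_mult_def
    by (induction m) (simp_all add: mono_val_insort mono_val_Cons mono_val_Nil)

type_synonym spoly = "(jvar list \<times> int) list"

definition spoly_val :: "spoly \<Rightarrow> jfun" where
  "spoly_val p = (\<lambda>pt. \<Sum>(m, c)\<leftarrow>p. of_int c * mono_val m pt)"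

fun spoly_add_term :: "jvar list \<times> int \<Rightarrow> spoly \<Rightarrow> spoly" where
  "spoly_add_term t [] = (if snd t = 0 then [] else [t])"
| "spoly_add_term t (u # p) =
     (if fst t = fst u then (if snd t + snd u = 0 then p else (fst t, snd t + snd u) # p)
      else u # spoly_add_term t p)"

lemma spoly_val_Nil: "spoly_val [] pt = 0"
  by (simp add: spoly_val_def)

lemma spoly_val_Cons: "spoly_val (t # p) pt = of_int (snd t) * mono_val (fst t) pt + spoly_val p pt"
  by (cases t) (simp add: spoly_val_def)

lemma spoly_val_add_term:
  "spoly_val (spoly_add_term t p) pt = of_int (snd t) * mono_val (fst t) pt + spoly_val p pt"
proof (induction p)
  case (Cons u p)
  show ?case
  proof (cases "fst t = fst u \<and> snd t + snd u = 0")
    case True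
    then have "real_of_int (snd t) + real_of_int (snd u) = 0" by (metis of_int_0 of_int_add)
    then have "real_of_int (snd t) * mono_val (fst u) pt + real_of_int (snd u) * mono_val (fst u) pt = 0"
      by (metis distrib_right mult_zero_left)
    then show ?thesis using True by (simp add: spoly_val_Cons)
  qed (use Cons in \<open>auto simp: spoly_val_Cons algebra_simps\<close>)
qed (simp add: spoly_val_Cons spoly_val_Nil)

definition spoly_add :: "spoly \<Rightarrow> spoly \<Rightarrow> spoly" where
  "spoly_add p q = foldr spoly_add_term p q"

lemma spoly_val_add: "spoly_val (spoly_add p q) pt = spoly_val p pt + spoly_val q pt"
  unfolding spoly_add_def
    by (induction p) (simp_all add: spoly_val_add_term spoly_val_Nil spoly_val_Cons)

definition spoly_mult :: "spoly \<Rightarrow> spoly \<Rightarrow> spoly" where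
  "spoly_mult p q = foldr (\<lambda>(m, c) acc. spoly_add (map (\<lambda>(m', c'). (mono_mult m m', c * c')) q) acc) p []"

lemma spoly_val_scale:
  "spoly_val (map (\<lambda>(m', c'). (mono_mult m m', c * c')) q) pt = of_int c * mono_val m pt * spoly_val q pt"
  by (induction q) (auto simp: spoly_val_Nil spoly_val_Cons mono_val_mono_mult algebra_simps split: prod.splits)

lemma spoly_val_mult: "spoly_val (spoly_mult p q) pt = spoly_val p pt * spoly_val q pt"
  unfolding spoly_mult_def
    by (induction p)
      (auto simp: spoly_val_add spoly_val_scale algebra_simps spoly_val_Nil spoly_val_Cons split: prod.splits)

fun normal_form :: "sexpr \<Rightarrow> spoly" where
  "normal_form (PC c) = (if c = 0 then [] else [([], c)])"
| "normal_form (PV v) = [([v], 1)]"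
| "normal_form (PA a b) = spoly_add (normal_form a) (normal_form b)"
| "normal_form (PM a b) = spoly_mult (normal_form a) (normal_form b)"

lemma spoly_val_normal_form: "spoly_val (normal_form e) pt = sval e pt"
  by (induction e) (auto simp: spoly_val_add spoly_val_mult spoly_val_Nil spoly_val_Cons mono_val_def)

fun reduce_on_E :: "sexpr \<Rightarrow> sexpr" where
  "reduce_on_E (PC c) = PC c"
| "reduce_on_E (PV v) = (case v of JU s \<Rightarrow> if 2 \<le> snd s then
       PM (PC ((-1) ^ (snd s div 2))) (PV (JU (fst s + 2 * (snd s div 2), snd s mod 2))) else PV v
     | _ \<Rightarrow> PV v)"
| "reduce_on_E (PA a b) = PA (reduce_on_E a) (reduce_on_E b)"
| "reduce_on_E (PM a b) = PM (reduce_on_E a) (reduce_on_E b)"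

lemma onE_swap: "onE pt \<Longrightarrow> pt (JU (a, b + 2)) = - pt (JU (a + 2, b))"
  unfolding onE_def by (simp add: eq_neg_iff_add_eq_0)

lemma onE_reduce: "onE pt \<Longrightarrow> pt (JU (a, 2 * k + r)) = (-1) ^ k * pt (JU (a + 2 * k, r))"
proof (induction k arbitrary: a)
  case 0
  then show ?case by simp
next
  case (Suc k)
  have "pt (JU (a, 2 * Suc k + r)) = - pt (JU (a + 2, 2 * k + r))"
    using onE_swap[OF Suc.prems, of a "2 * k + r"] by (simp add: algebra_simps)
  also have "\<dots> = - ((-1) ^ k * pt (JU (a + 2 + 2 * k, r)))" using Suc by simp
  finally show ?case by (simp add: algebra_simps)
qed

lemma sval_reduce_on_E: "onE pt \<Longrightarrow> sval (reduce_on_E e) pt = sval e pt"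
proof (induction e)
  case (PV v)
  then show ?case
  proof (cases v)
    case (JU s)
    obtain a b where s: "s = (a, b)" by (cases s)
    show ?thesis
    proof (cases "2 \<le> b")
      case True
      have e: "(-1) ^ (b div 2) * pt (JU (a + 2 * (b div 2), b mod 2)) = pt (JU (a, b))"
        using onE_reduce[OF PV, of a "b div 2" "b mod 2"] by simp
      have "sval (reduce_on_E (PV v)) pt = (-1) ^ (b div 2) * pt (JU (a + 2 * (b div 2), b mod 2))"
        using JU s True by simp
      then show ?thesis using e JU s by simp
    next
      case False
      then show ?thesis using JU s by simp
    qed
  qed auto
qed auto

definition vanishes :: "sexpr \<Rightarrow> bool" where
  "vanishes e \<longleftrightarrow> normal_form e = []"

definition vanishes_on_E :: "sexpr \<Rightarrow> bool" where
  "vanishes_on_E e \<longleftrightarrow> normal_form (reduce_on_E e) = []"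

lemma sval_eq_0_if_vanishes: "vanishes e \<Longrightarrow> sval e pt = 0"
  using spoly_val_normal_form[of e pt] by (simp add: vanishes_def spoly_val_Nil)

lemma zeroE_if_vanishes_on_E: "vanishes_on_E e \<Longrightarrow> zeroE (sval e)"
  unfolding vanishes_on_E_def zeroE_def
  using sval_eq_0_if_vanishes[unfolded vanishes_def] sval_reduce_on_E by metis

section \<open>Symbolic bivectors and bi-differential operators\<close>

type_synonym slin = "((nat \<times> nat) \<times> sexpr) list"

fun lin_of :: "slin \<Rightarrow> lin" where
  "lin_of [] = (\<lambda>s pt. 0)"
| "lin_of ((t, e) # xs) = (\<lambda>s pt. (if t = s then sval e pt else 0) + lin_of xs s pt)"

lemma mkL_eq_lin_of: "mkL (map (\<lambda>(t, e). (t, sval e)) xs) = lin_of xs"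
  by (induction xs) (auto simp: mkL_def fun_eq_iff)

lemma smooth_jet_if_sval: "smooth_jet (\<lambda>pt. if C then sval e pt else 0)"
  by (cases C) (simp_all add: smooth_jet_sval smooth_jet_const)

lemma smooth_jet_lin_of: "smooth_jet (lin_of xs s)"
  by (induction xs) (auto intro!: smooth_jet_add smooth_jet_const smooth_jet_if_sval)

lemma lin_of_append: "lin_of (xs @ ys) = (\<lambda>s pt. lin_of xs s pt + lin_of ys s pt)"
  by (induction xs) (auto simp: fun_eq_iff)

lemma lin_of_notin: "s \<notin> fst ` set xs \<Longrightarrow> lin_of xs s = (\<lambda>_. 0)"
  by (induction xs) (auto simp: fun_eq_iff)

fun lin_coeff :: "slin \<Rightarrow> nat \<times> nat \<Rightarrow> sexpr" where
  "lin_coeff [] s = PC 0"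
| "lin_coeff ((t, e) # xs) s = (if t = s then sadd e (lin_coeff xs s) else lin_coeff xs s)"

lemma sval_lin_coeff: "sval (lin_coeff xs s) = lin_of xs s"
  by (induction xs) (auto simp: sval_sadd fun_eq_iff)

lemma LDX_LDY_unshift:
  "LDX L = (\<lambda>s pt. Dxy True (L s) pt + unshift True L s pt)"
  "LDY L = (\<lambda>s pt. Dxy False (L s) pt + unshift False L s pt)"
  by (simp_all add: fun_eq_iff LDX_def LDY_def Dxy_def unshift_def has_pred_def pred_idx_def)

definition sLDxy :: "bool \<Rightarrow> slin \<Rightarrow> slin" where
  "sLDxy b xs = map (\<lambda>(t, e). (t, sDxy b e)) xs @ map (\<lambda>(t, e). (step b t, e)) xs"

lemma Dxy_lin_of: "Dxy b (lin_of xs s) = lin_of (map (\<lambda>(t, e). (t, sDxy b e)) xs) s"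
proof (induction xs)
  case Nil
  then show ?case by (simp add: Dxy_const)
next
  case (Cons te xs)
  obtain t e where te: "te = (t, e)" by (cases te)
  have "Dxy b (\<lambda>pt. if t = s then sval e pt else 0) = (\<lambda>pt. if t = s then sval (sDxy b e) pt else 0)"
    by (cases "t = s") (simp_all add: Dxy_sval Dxy_const)
  then show ?case using Cons te by (simp add: Dxy_add smooth_jet_if_sval smooth_jet_lin_of)
qed

lemma unshift_lin_of: "unshift b (lin_of xs) s = lin_of (map (\<lambda>(t, e). (step b t, e)) xs) s"
  by (induction xs) (auto simp: unshift_def step_eq_iff fun_eq_iff)

lemma LDxy_lin_of: "(\<lambda>s pt. Dxy b (lin_of xs s) pt + unshift b (lin_of xs) s pt) = lin_of (sLDxy b xs)"
  by (simp add: sLDxy_def lin_of_append Dxy_lin_of unshift_lin_of)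

definition sLD :: "nat \<times> nat \<Rightarrow> slin \<Rightarrow> slin" where
  "sLD s xs = (sLDxy True ^^ fst s) ((sLDxy False ^^ snd s) xs)"

lemma LD_lin_of: "LD s (lin_of xs) = lin_of (sLD s xs)"
proof -
  have "(LDX ^^ n) (lin_of xs) = lin_of ((sLDxy True ^^ n) xs)"
    and "(LDY ^^ n) (lin_of xs) = lin_of ((sLDxy False ^^ n) xs)" for n xs
    by (induction n) (simp_all add: LDX_LDY_unshift LDxy_lin_of)
  then show ?thesis by (simp add: LD_def sLD_def)
qed

lemma LD_zero: "LD s (\<lambda>k pt. 0) = (\<lambda>k pt. 0)"
  using LD_lin_of[of s "[]"] by (simp add: sLD_def funpow_fixed_point sLDxy_def)

definition slapL :: "slin \<Rightarrow> slin" where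
  "slapL xs = sLDxy True (sLDxy True xs) @ sLDxy False (sLDxy False xs)"

lemma lapL_lin_of: "lapL (lin_of xs) = lin_of (slapL xs)"
  by (simp add: lapL_def slapL_def LDX_LDY_unshift LDxy_lin_of lin_of_append)

definition spL :: slin where "spL = [((0,0), PC 1)]"

lemma pL_eq_lin_of: "pL = lin_of spL"
  by (auto simp: pL_def spL_def fun_eq_iff)

definition sscale :: "sexpr \<Rightarrow> slin \<Rightarrow> slin" where
  "sscale e xs = map (\<lambda>(t, f). (t, smul e f)) xs"

lemma lin_of_sscale: "lin_of (sscale e xs) = (\<lambda>k pt. sval e pt * lin_of xs k pt)"
  by (induction xs) (auto simp: sscale_def sval_smul fun_eq_iff algebra_simps)

lemma lin_of_concat: "lin_of (concat xss) = (\<lambda>s pt. \<Sum>xs\<leftarrow>xss. lin_of xs s pt)"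
  by (induction xss) (auto simp: lin_of_append fun_eq_iff)

definition sadjL :: "slin \<Rightarrow> slin \<Rightarrow> slin" where
  "sadjL H P = concat (map (\<lambda>s. sscale (PC ((-1) ^ (fst s + snd s))) (sLD s (sscale (lin_coeff H s) P)))
                (remdups (map fst H)))"

lemma adjL_lin_of: "adjL (lin_of H) (lin_of P) = lin_of (sadjL H P)"
proof (intro ext)
  fix r pt
  let ?g = "\<lambda>s. (-1) ^ (fst s + snd s) * LD s (\<lambda>k pt'. lin_of H s pt' * lin_of P k pt') r pt"
  have sub: "{s. lin_of H s \<noteq> (\<lambda>_. 0)} \<subseteq> set (remdups (map fst H))"
    using lin_of_notin by fastforce
  have "adjL (lin_of H) (lin_of P) r pt = (\<Sum>s\<in>{s. lin_of H s \<noteq> (\<lambda>_. 0)}. ?g s)"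
    unfolding adjL_def by simp
  also have "\<dots> = (\<Sum>s\<in>set (remdups (map fst H)). ?g s)"
    by (rule sum.mono_neutral_left[OF finite_set sub]) (simp add: LD_zero)
  also have "\<dots> = (\<Sum>s\<leftarrow>remdups (map fst H). ?g s)"
    by (rule sum.distinct_set_conv_list) simp
  also have "\<dots> = lin_of (sadjL H P) r pt"
  proof -
    have "?g s = lin_of (sscale (PC ((-1) ^ (fst s + snd s))) (sLD s (sscale (lin_coeff H s) P))) r pt" for s
    proof -
      have e: "(\<lambda>k pt'. lin_of H s pt' * lin_of P k pt') = lin_of (sscale (lin_coeff H s) P)"
        by (simp add: lin_of_sscale sval_lin_coeff)
      show ?thesis unfolding e LD_lin_of by (simp add: lin_of_sscale)
    qed
    then show ?thesis unfolding sadjL_def lin_of_concat by (simp add: o_def)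
  qed
  finally show "adjL (lin_of H) (lin_of P) r pt = lin_of (sadjL H P) r pt" .
qed

(* An entry (s, t, e) stands for the term e D_s(a) D_t(b) of nabla(a, b). *)
type_synonym snabla = "((nat \<times> nat) \<times> (nat \<times> nat) \<times> sexpr) list"

fun nabla_of :: "snabla \<Rightarrow> nat \<times> nat \<Rightarrow> nat \<times> nat \<Rightarrow> jfun" where
  "nabla_of [] = (\<lambda>s t pt. 0)"
| "nabla_of ((a, b, e) # cs) = (\<lambda>s t pt. (if a = s \<and> b = t then sval e pt else 0) + nabla_of cs s t pt)"

fun nabla_coeff :: "snabla \<Rightarrow> nat \<times> nat \<Rightarrow> nat \<times> nat \<Rightarrow> sexpr" where
  "nabla_coeff [] s t = PC 0"
| "nabla_coeff ((a, b, e) # cs) s t =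
     (if a = s \<and> b = t then sadd e (nabla_coeff cs s t) else nabla_coeff cs s t)"

lemma sval_nabla_coeff: "sval (nabla_coeff cs s t) = nabla_of cs s t"
  by (induction cs rule: nabla_of.induct) (auto simp: sval_sadd fun_eq_iff)

lemma smooth_jet_nabla_of: "smooth_jet (nabla_of cs s t)"
  using smooth_jet_sval[of "nabla_coeff cs s t"] by (simp add: sval_nabla_coeff)

lemma nabla_of_notin: "(s, t) \<notin> (\<lambda>(a, b, e). (a, b)) ` set cs \<Longrightarrow> nabla_of cs s t = (\<lambda>_. 0)"
  by (induction cs rule: nabla_of.induct) (auto simp: fun_eq_iff)

lemma nabla_of_notin_fst: "s \<notin> fst ` set cs \<Longrightarrow> nabla_of cs s t = (\<lambda>_. 0)"
  by (induction cs rule: nabla_of.induct) (auto simp: fun_eq_iff)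

lemma nabla_of_notin_snd: "t \<notin> (\<lambda>(a, b, e). b) ` set cs \<Longrightarrow> nabla_of cs s t = (\<lambda>_. 0)"
  by (induction cs rule: nabla_of.induct) (auto simp: fun_eq_iff)

definition sFprol :: "nat \<times> nat \<Rightarrow> sexpr" where
  "sFprol s = PA (PV (JU (fst s + 2, snd s))) (PV (JU (fst s, snd s + 2)))"

lemma sval_sFprol: "sval (sFprol s) = Fprol s"
  by (simp add: sFprol_def Fprol_def)

definition snabla_F :: "snabla \<Rightarrow> nat \<times> nat \<Rightarrow> sexpr" where
  "snabla_F cs k =
     foldr (\<lambda>s acc. sadd (smul (nabla_coeff cs s k) (sFprol s)) acc) (remdups (map fst cs)) (PC 0)"

lemma sum_nabla_of_Dm_Flap:
  "(\<Sum>s\<in>{s. nabla_of cs s k \<noteq> (\<lambda>_. 0)}. nabla_of cs s k pt * Dm s Flap pt) = sval (snabla_F cs k) pt"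
proof -
  have "nabla_of cs s k = (\<lambda>_. 0)" if "s \<notin> set (remdups (map fst cs))" for s
    using that nabla_of_notin_fst by simp
  then have "{s. nabla_of cs s k \<noteq> (\<lambda>_. 0)} \<subseteq> set (remdups (map fst cs))" by blast
  then have "(\<Sum>s\<in>{s. nabla_of cs s k \<noteq> (\<lambda>_. 0)}. nabla_of cs s k pt * Dm s Flap pt)
      = (\<Sum>s\<in>set (remdups (map fst cs)). nabla_of cs s k pt * Dm s Flap pt)"
    by (rule sum.mono_neutral_left[OF finite_set]) auto
  also have "\<dots> = (\<Sum>s\<leftarrow>remdups (map fst cs). nabla_of cs s k pt * Dm s Flap pt)"
    by (rule sum.distinct_set_conv_list) simp
  also have "\<dots> = sval (snabla_F cs k) pt"
    unfolding snabla_F_def sval_foldr_sadd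
      by (simp add: sval_smul sval_nabla_coeff sval_sFprol Dm_Flap)
  finally show ?thesis .
qed

definition check_admissible :: "slin \<Rightarrow> snabla \<Rightarrow> bool" where
  "check_admissible H cs = list_all
     (\<lambda>k. vanishes (sdiff (sdiff (lin_coeff (slapL H) k) (lin_coeff (sadjL H (slapL spL)) k)) (snabla_F cs k)))
     (remdups (map fst (slapL H) @ map fst (sadjL H (slapL spL)) @ map (\<lambda>(a, b, e). b) cs))"

lemma admissible_nabla_of:
  assumes "check_admissible H cs"
  shows "admissible (lin_of H) (nabla_of cs)"
  unfolding admissible_def
proof (intro conjI allI)
  have "{(s, t). nabla_of cs s t \<noteq> (\<lambda>_. 0)} \<subseteq> (\<lambda>(a, b, e). (a, b)) ` set cs"
    using nabla_of_notin by blast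
  then show "finite {(s, t). nabla_of cs s t \<noteq> (\<lambda>_. 0)}" by (rule finite_subset) simp
next
  fix s t show "smooth_jet (nabla_of cs s t)" by (rule smooth_jet_nabla_of)
next
  fix k pt
  let ?L = "slapL H" and ?A = "sadjL H (slapL spL)"
  have "lin_of ?L k pt - lin_of ?A k pt = sval (snabla_F cs k) pt"
  proof (cases "k \<in> set (map fst ?L @ map fst ?A @ map (\<lambda>(a, b, e). b) cs)")
    case True
    then have "vanishes (sdiff (sdiff (lin_coeff ?L k) (lin_coeff ?A k)) (snabla_F cs k))"
      using assms unfolding check_admissible_def list_all_iff by auto
    from sval_eq_0_if_vanishes[OF this, of pt] show ?thesis by (simp add: sval_sdiff sval_lin_coeff)
  next
    case False
    then have "nabla_of cs s k = (\<lambda>_. 0)" for s by (intro nabla_of_notin_snd) auto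
    then have "sval (snabla_F cs k) pt = 0" using sum_nabla_of_Dm_Flap[of cs k pt] by simp
    with False show ?thesis by (simp add: lin_of_notin)
  qed
  then show "lapL (lin_of H) k pt - adjL (lin_of H) (lapL pL) k pt =
        (\<Sum>s\<in>{s. nabla_of cs s k \<noteq> (\<lambda>_. 0)}. nabla_of cs s k pt * Dm s Flap pt)"
    by (simp add: lapL_lin_of pL_eq_lin_of adjL_lin_of sum_nabla_of_Dm_Flap)
qed

definition sLred :: "slin \<Rightarrow> nat \<times> nat \<Rightarrow> sexpr" where
  "sLred xs ab = foldr (\<lambda>k acc. sadd (smul (PC ((-1) ^ k)) (lin_coeff xs (fst ab - 2 * k, snd ab + 2 * k))) acc)
      [0..<fst ab div 2 + 1] (PC 0)"

lemma sval_sLred: "sval (sLred xs ab) = Lred (lin_of xs) ab"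
proof
  fix pt
  have "sval (sLred xs ab) pt
      = (\<Sum>k\<leftarrow>[0..<fst ab div 2 + 1]. (-1) ^ k * lin_of xs (fst ab - 2 * k, snd ab + 2 * k) pt)"
    unfolding sLred_def sval_foldr_sadd by (simp add: sval_smul sval_lin_coeff)
  also have "\<dots> = (\<Sum>k\<in>{..fst ab div 2}. (-1) ^ k * lin_of xs (fst ab - 2 * k, snd ab + 2 * k) pt)"
    by (simp only: sum.distinct_set_conv_list[symmetric] distinct_upt set_upt atLeast0LessThan
        lessThan_Suc_atMost flip: Suc_eq_plus1)
  finally show "sval (sLred xs ab) pt = Lred (lin_of xs) ab pt" unfolding Lred_def by simp
qed

(* On T*E, p_t equals plus or minus the internal coordinate p_(internal_index t). *)
definition internal_index :: "nat \<times> nat \<Rightarrow> nat \<times> nat" where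
  "internal_index t = (fst t + 2 * (snd t div 2), snd t mod 2)"

definition check_zeroT_L :: "slin \<Rightarrow> bool" where
  "check_zeroT_L xs = list_all (\<lambda>ab. vanishes_on_E (sLred xs ab)) (map (\<lambda>t. internal_index (fst t)) xs)"

lemma zeroT_L_if_check:
  assumes "check_zeroT_L xs"
  shows "zeroT_L (lin_of xs)"
  unfolding zeroT_L_def
proof (intro allI impI)
  fix ab :: "nat \<times> nat" assume b1: "snd ab \<le> 1"
  show "zeroE (Lred (lin_of xs) ab)"
  proof (cases "ab \<in> set (map (\<lambda>t. internal_index (fst t)) xs)")
    case True
    then have "vanishes_on_E (sLred xs ab)"
      using assms unfolding check_zeroT_L_def list_all_iff by blast
    from zeroE_if_vanishes_on_E[OF this] show ?thesis by (simp add: sval_sLred)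
  next
    case False
    have "lin_of xs (fst ab - 2 * k, snd ab + 2 * k) = (\<lambda>_. 0)" if "k \<le> fst ab div 2" for k
    proof (rule lin_of_notin)
      have "internal_index (fst ab - 2 * k, snd ab + 2 * k) = ab"
        using b1 that unfolding internal_index_def by (cases ab) auto
      then show "(fst ab - 2 * k, snd ab + 2 * k) \<notin> fst ` set xs" using False by force
    qed
    then show ?thesis unfolding zeroE_def Lred_def by simp
  qed
qed

section \<open>Symbolic p-quadratic elements and the Schouten bracket\<close>

type_synonym squad = "nat \<times> nat \<Rightarrow> nat \<times> nat \<Rightarrow> sexpr"

definition quad_of :: "squad \<Rightarrow> quad" where
  "quad_of q = (\<lambda>r k. sval (q r k))"

definition quad_smooth :: "quad \<Rightarrow> bool" where
  "quad_smooth q \<longleftrightarrow> (\<forall>r k. smooth_jet (q r k))"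

lemma quad_smooth_quad_of: "quad_smooth (quad_of q)"
  by (simp add: quad_smooth_def quad_of_def smooth_jet_sval)

lemma quad_smooth_QDxy:
  assumes "quad_smooth q" shows "quad_smooth (QDxy b q)"
  unfolding quad_smooth_def QDxy_def
proof (intro allI)
  fix r k
  have "smooth_jet (q r' k')" for r' k' using assms unfolding quad_smooth_def by blast
  then show "smooth_jet (\<lambda>pt. Dxy b (q r k) pt + unshift b (\<lambda>r. q r k) r pt + unshift b (q r) k pt)"
    by (intro smooth_jet_add smooth_jet_Dxy smooth_jet_unshift)
qed

lemma QDxy_scale: "quad_smooth q \<Longrightarrow> QDxy b (\<lambda>r k pt. a * q r k pt) = (\<lambda>r k pt. a * QDxy b q r k pt)"
  unfolding quad_smooth_def QDxy_def unshift_def by (simp add: Dxy_cmult fun_eq_iff algebra_simps)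

lemma QD_scale:
  assumes "quad_smooth q"
  shows "QD s (\<lambda>r k pt. a * q r k pt) = (\<lambda>r k pt. a * QD s q r k pt)"
proof -
  have "quad_smooth ((QDxy b ^^ n) q) \<and>
      (QDxy b ^^ n) (\<lambda>r k pt. a * q r k pt) = (\<lambda>r k pt. a * (QDxy b ^^ n) q r k pt)"
    if "quad_smooth q" for b n q
    using that by (induction n) (simp_all add: quad_smooth_QDxy QDxy_scale)
  then show ?thesis using assms unfolding QD_QDxy by simp
qed

definition sQDxy :: "bool \<Rightarrow> squad \<Rightarrow> squad" where
  "sQDxy b q r k = sadd (sadd (sDxy b (q r k)) (if has_pred b r then q (pred_idx b r) k else PC 0))
      (if has_pred b k then q r (pred_idx b k) else PC 0)"

definition sQD :: "nat \<times> nat \<Rightarrow> squad \<Rightarrow> squad" where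
  "sQD s q = (sQDxy True ^^ fst s) ((sQDxy False ^^ snd s) q)"

lemma QD_quad_of: "QD s (quad_of q) = quad_of (sQD s q)"
proof -
  have step: "QDxy b (quad_of q) = quad_of (sQDxy b q)" for b q
    by (simp add: QDxy_def quad_of_def sQDxy_def unshift_def Dxy_sval sval_sadd fun_eq_iff)
  have "(QDxy b ^^ n) (quad_of q) = quad_of ((sQDxy b ^^ n) q)" for b n q
    by (induction n) (simp_all add: step)
  then show ?thesis by (simp add: QD_QDxy sQD_def)
qed

definition snabla_row :: "snabla \<Rightarrow> nat \<times> nat \<Rightarrow> squad" where
  "snabla_row cs s r' k' = (if r' = (0,0) then nabla_coeff cs s k' else PC 0)"

definition sHp :: "snabla \<Rightarrow> squad" where
  "sHp cs r k = foldr (\<lambda>s acc. sadd (smul (PC ((-1) ^ (fst s + snd s))) (sQD s (snabla_row cs s) r k)) acc)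
      (remdups (map fst cs)) (PC 0)"

(* The factor -1/2 in H_p is not integral, so it stays outside the symbolic expressions. *)
lemma Hp_nabla_of: "Hp (nabla_of cs) = (\<lambda>r k pt. - (1/2) * quad_of (sHp cs) r k pt)"
proof -
  let ?S = "set (remdups (map fst cs))"
  have "nabla_of cs s t = (\<lambda>_. 0)" if "s \<notin> ?S" for s t using that nabla_of_notin_fst by simp
  then have "{s. \<exists>t. nabla_of cs s t \<noteq> (\<lambda>_. 0)} \<subseteq> ?S" by blast
  then have "Hp (nabla_of cs) = Hp_on (nabla_of cs) ?S" by (rule Hp_eq_Hp_on[OF finite_set])
  also have "\<dots> = (\<lambda>r k pt. - (1/2) * quad_of (sHp cs) r k pt)"
  proof (intro ext)
    fix r k pt
    have row: "(\<lambda>r' k' pt'. if r' = (0,0) then nabla_of cs s k' pt' else 0) = quad_of (snabla_row cs s)" for s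
      by (auto simp: quad_of_def snabla_row_def sval_nabla_coeff fun_eq_iff)
    have "(\<Sum>s\<in>?S. (-1) ^ (fst s + snd s) * QD s (quad_of (snabla_row cs s)) r k pt)
        = (\<Sum>s\<leftarrow>remdups (map fst cs). (-1) ^ (fst s + snd s) * QD s (quad_of (snabla_row cs s)) r k pt)"
      by (rule sum.distinct_set_conv_list) simp
    also have "\<dots> = quad_of (sHp cs) r k pt"
      unfolding QD_quad_of by (simp add: quad_of_def sHp_def sval_foldr_sadd sval_smul)
    finally show "Hp_on (nabla_of cs) ?S r k pt = - (1/2) * quad_of (sHp cs) r k pt"
      unfolding Hp_on_def row by simp
  qed
  finally show ?thesis .
qed

lemma QD_Hp_nabla_of: "QD s (Hp (nabla_of cs)) = (\<lambda>r k pt. - (1/2) * sval (sQD s (sHp cs) r k) pt)"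
  unfolding Hp_nabla_of QD_scale[OF quad_smooth_quad_of] QD_quad_of by (simp add: quad_of_def)

definition sevq_Hp :: "snabla \<Rightarrow> slin \<Rightarrow> squad" where
  "sevq_Hp cs H' r k =
     foldr (\<lambda>s acc. sadd (smul (lin_coeff H' s) (sQD s (sHp cs) r k)) acc) (remdups (map fst H')) (PC 0)"

definition sevq_H :: "slin \<Rightarrow> slin \<Rightarrow> squad" where
  "sevq_H H H' r k = foldr (\<lambda>s acc. sadd (smul (lin_coeff (sLD s H) r) (spd (JU s) (lin_coeff H' k))) acc)
      (remdups (ju_indices (svars (lin_coeff H' k)))) (PC 0)"

lemma sum_list_neg_half: "(\<Sum>x\<leftarrow>xs. - (f x / 2)) = - ((\<Sum>x\<leftarrow>xs. f x) / (2::real))"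
  by (induction xs) (auto simp: field_simps)

lemma evq_Hp_part:
  "(\<Sum>s\<in>{s. lin_of H' s \<noteq> (\<lambda>_. 0)}. lin_of H' s pt * QD s (Hp (nabla_of cs)) r k pt)
    = - (1/2) * sval (sevq_Hp cs H' r k) pt"
proof -
  have "{s. lin_of H' s \<noteq> (\<lambda>_. 0)} \<subseteq> set (remdups (map fst H'))" using lin_of_notin by fastforce
  then have "(\<Sum>s\<in>{s. lin_of H' s \<noteq> (\<lambda>_. 0)}. lin_of H' s pt * QD s (Hp (nabla_of cs)) r k pt)
      = (\<Sum>s\<in>set (remdups (map fst H')). lin_of H' s pt * QD s (Hp (nabla_of cs)) r k pt)"
    by (rule sum.mono_neutral_left[OF finite_set]) auto
  also have "\<dots> = (\<Sum>s\<leftarrow>remdups (map fst H'). lin_of H' s pt * QD s (Hp (nabla_of cs)) r k pt)"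
    by (rule sum.distinct_set_conv_list) simp
  also have "\<dots> = - (1/2) * sval (sevq_Hp cs H' r k) pt"
    unfolding sevq_Hp_def sval_foldr_sadd QD_Hp_nabla_of
    by (simp add: sval_smul sval_lin_coeff sum_list_neg_half)
  finally show ?thesis .
qed

lemma evq_H_part:
  "(\<Sum>s\<in>{s. pd (JU s) (lin_of H' k) \<noteq> (\<lambda>_. 0)}. LD s (lin_of H) r pt * pd (JU s) (lin_of H' k) pt)
    = sval (sevq_H H H' r k) pt"
proof -
  let ?T = "set (remdups (ju_indices (svars (lin_coeff H' k))))"
  have H'k: "lin_of H' k = sval (lin_coeff H' k)" by (simp add: sval_lin_coeff)
  have "pd (JU s) (lin_of H' k) = (\<lambda>_. 0)" if "s \<notin> ?T" for s
    using that unfolding H'k by (simp add: pd_sval_eq_0 JU_in_set_iff)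
  then have "{s. pd (JU s) (lin_of H' k) \<noteq> (\<lambda>_. 0)} \<subseteq> ?T" by blast
  then have "(\<Sum>s\<in>{s. pd (JU s) (lin_of H' k) \<noteq> (\<lambda>_. 0)}. LD s (lin_of H) r pt * pd (JU s) (lin_of H' k) pt)
      = (\<Sum>s\<in>?T. LD s (lin_of H) r pt * pd (JU s) (lin_of H' k) pt)"
    by (rule sum.mono_neutral_left[OF finite_set]) auto
  also have "\<dots> = sval (sevq_H H H' r k) pt"
    unfolding sevq_H_def sval_foldr_sadd H'k pd_sval
    by (simp add: sval_smul sval_lin_coeff LD_lin_of sum.set_conv_list)
  finally show ?thesis .
qed

lemma evq_lin_of:
  "evq (lin_of H) (nabla_of cs) (lin_of H') r k pt
    = - (1/2) * sval (sevq_Hp cs H' r k) pt + sval (sevq_H H H' r k) pt"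
  unfolding evq_def evq_Hp_part evq_H_part ..

definition sschouten_twice :: "slin \<Rightarrow> snabla \<Rightarrow> slin \<Rightarrow> snabla \<Rightarrow> squad" where
  "sschouten_twice H c H' c' r k =
     PA (PA (PM (PC (-1)) (sevq_Hp c H' r k)) (PM (PC 2) (sevq_H H H' r k)))
        (PA (PM (PC (-1)) (sevq_Hp c' H r k)) (PM (PC 2) (sevq_H H' H r k)))"

lemma sval_sschouten_twice:
  "sval (sschouten_twice H c H' c' r k) pt
    = 2 * schouten (lin_of H) (nabla_of c) (lin_of H') (nabla_of c') r k pt"
  unfolding sschouten_twice_def schouten_def evq_lin_of by (simp add: algebra_simps)

fun ival :: "sexpr \<Rightarrow> (jvar \<Rightarrow> int) \<Rightarrow> int" where
  "ival (PC c) p = c"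
| "ival (PV v) p = p v"
| "ival (PA a b) p = ival a p + ival b p"
| "ival (PM a b) p = ival a p * ival b p"

lemma sval_ival: "sval e (\<lambda>v. of_int (p v)) = of_int (ival e p)"
  by (induction e) auto

(* Twice the coefficient of p_(1,1) p_(2,1) in the bracket restricted to T*E,
   where p_(0,3) = - p_(2,1) and the p's anticommute. *)
definition sbracket_coeff :: "slin \<Rightarrow> snabla \<Rightarrow> slin \<Rightarrow> snabla \<Rightarrow> sexpr" where
  "sbracket_coeff H c H' c' =
     PA (PA (sschouten_twice H c H' c' (1,1) (2,1)) (PM (PC (-1)) (sschouten_twice H c H' c' (1,1) (0,3))))
        (PA (PM (PC (-1)) (sschouten_twice H c H' c' (2,1) (1,1))) (sschouten_twice H c H' c' (0,3) (1,1)))"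

definition witness_pt :: "jvar \<Rightarrow> int" where
  "witness_pt v = (if v = JX \<or> v = JU (1,0) \<or> v = JU (0,1) then 1 else 0)"

lemma onE_witness_pt: "onE (\<lambda>v. of_int (witness_pt v))"
  unfolding onE_def witness_pt_def by simp

lemma not_zeroT_Q_if_witness:
  assumes "ival (sbracket_coeff H c H' c') witness_pt \<noteq> 0"
  shows "\<not> zeroT_Q (schouten (lin_of H) (nabla_of c) (lin_of H') (nabla_of c'))"
proof
  let ?q = "schouten (lin_of H) (nabla_of c) (lin_of H') (nabla_of c')"
  let ?pt = "\<lambda>v. real_of_int (witness_pt v)"
  assume "zeroT_Q ?q"
  then have "zeroE (\<lambda>pt. Qred ?q (1,1) (2,1) pt - Qred ?q (2,1) (1,1) pt)"
    unfolding zeroT_Q_def by simp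
  then have "Qred ?q (1,1) (2,1) ?pt - Qred ?q (2,1) (1,1) ?pt = 0"
    using onE_witness_pt unfolding zeroE_def by blast
  moreover have "Qred ?q (1,1) (2,1) ?pt = ?q (1,1) (2,1) ?pt - ?q (1,1) (0,3) ?pt"
    and "Qred ?q (2,1) (1,1) ?pt = ?q (2,1) (1,1) ?pt - ?q (0,3) (1,1) ?pt"
    unfolding Qred_def by (simp_all add: numeral_eq_Suc)
  ultimately have "sval (sbracket_coeff H c H' c') ?pt = 0"
    unfolding sbracket_coeff_def by (simp add: sval_sschouten_twice algebra_simps)
  then show False using assms sval_ival[of "sbracket_coeff H c H' c'" witness_pt] by simp
qed

definition check_eq_on_E :: "slin \<Rightarrow> slin \<Rightarrow> bool" where
  "check_eq_on_E xs ys =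
     list_all (\<lambda>k. vanishes_on_E (sdiff (lin_coeff xs k) (lin_coeff ys k))) (map fst (xs @ ys))"

lemma zeroE_if_check_eq_on_E:
  assumes "check_eq_on_E xs ys"
  shows "zeroE (\<lambda>pt. lin_of xs k pt - lin_of ys k pt)"
proof (cases "k \<in> fst ` set (xs @ ys)")
  case True
  then have "vanishes_on_E (sdiff (lin_coeff xs k) (lin_coeff ys k))"
    using assms unfolding check_eq_on_E_def list_all_iff by auto
  from zeroE_if_vanishes_on_E[OF this] show ?thesis
    by (simp add: sval_sdiff sval_lin_coeff)
next
  case False
  then have "k \<notin> fst ` set xs" "k \<notin> fst ` set ys" by auto
  then show ?thesis by (simp add: lin_of_notin zeroE_def)
qed

definition bivector_certificate :: "slin \<Rightarrow> bool" where
  "bivector_certificate H \<longleftrightarrow> check_zeroT_L (slapL H) \<and> check_eq_on_E (sadjL H (slapL spL)) (slapL H)"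

lemma var_bivector_lin_of:
  assumes "bivector_certificate H"
  shows "var_bivector (lin_of H)"
  unfolding var_bivector_def
proof (intro conjI allI)
  have "{s. lin_of H s \<noteq> (\<lambda>_. 0)} \<subseteq> fst ` set H" using lin_of_notin by blast
  then show "finite {s. lin_of H s \<noteq> (\<lambda>_. 0)}" by (rule finite_subset) simp
  show "smooth_jet (lin_of H s)" for s by (rule smooth_jet_lin_of)
  show "zeroT_L (lapL (lin_of H))"
    using assms zeroT_L_if_check unfolding bivector_certificate_def lapL_lin_of by blast
  show "zeroE (\<lambda>pt. adjL (lin_of H) (lapL pL) k pt - lapL (lin_of H) k pt)" for k
    using assms zeroE_if_check_eq_on_E
      unfolding bivector_certificate_def lapL_lin_of pL_eq_lin_of adjL_lin_of
    by blast
qed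

definition u_free :: "slin \<Rightarrow> bool" where
  "u_free H \<longleftrightarrow> (\<forall>(t, e)\<in>set H. set (svars e) \<subseteq> {JX, JY})"

lemma pd_JU_lin_of_u_free:
  assumes "u_free H"
  shows "pd (JU s) (lin_of H k) = (\<lambda>_. 0)"
proof (rule pd_indep[of "{JX, JY}"])
  show "lin_of H k pt = lin_of H k pt'" if "\<forall>v\<in>{JX, JY}. pt v = pt' v" for pt pt'
    using assms
  proof (induction H)
    case (Cons te H)
    then show ?case using that sval_cong[of "snd te" pt pt'] by (cases te) (auto simp: u_free_def)
  qed simp
qed simp

(* For u-free H the derivatives of H along the u_s vanish, and the admissible choice nabla = 0
   gives H_p = 0: both parts of the evolutionary derivation vanish. *)
lemma zeroT_Q_schouten_u_free:
  assumes "u_free H"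
  shows "zeroT_Q (schouten (lin_of H) (nabla_of []) (lin_of H) (nabla_of []))"
proof -
  have "Hp (nabla_of []) = (\<lambda>r k pt. 0)" unfolding Hp_def by simp
  then have "evq (lin_of H) (nabla_of []) (lin_of H) r k pt = 0" for r k pt
    unfolding evq_def using pd_JU_lin_of_u_free[OF assms] by (simp add: QD_zero)
  then show ?thesis
    unfolding zeroT_Q_def zeroE_def Qred_def schouten_def by simp
qed

lemma poisson_lin_of_u_free:
  assumes "bivector_certificate H" "check_admissible H []" "u_free H"
  shows "poisson (lin_of H)"
  unfolding poisson_def schouten_zero_def
proof (intro conjI allI impI)
  show "var_bivector (lin_of H)" using assms(1) by (rule var_bivector_lin_of)
  show "\<exists>c. admissible (lin_of H) c" "\<exists>c. admissible (lin_of H) c"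
    using admissible_nabla_of[OF assms(2)] by blast+
  fix c c' assume "admissible (lin_of H) c" "admissible (lin_of H) c'"
  then show "zeroT_Q (schouten (lin_of H) c (lin_of H) c')"
    using schouten_cong admissible_nabla_of[OF assms(2)] zeroT_Q_schouten_u_free[OF assms(3)] by blast
qed

lemma schouten_nonzero_lin_of:
  assumes "check_admissible H c" "check_admissible H' c'" "ival (sbracket_coeff H c H' c') witness_pt \<noteq> 0"
  shows "schouten_nonzero (lin_of H) (lin_of H')"
  unfolding schouten_nonzero_def
proof (intro conjI allI impI)
  show "\<exists>c. admissible (lin_of H) c" "\<exists>c. admissible (lin_of H') c"
    using admissible_nabla_of assms(1,2) by blast+
  fix d d' assume "admissible (lin_of H) d" "admissible (lin_of H') d'"
  then show "\<not> zeroT_Q (schouten (lin_of H) d (lin_of H') d')"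
    using schouten_cong admissible_nabla_of[OF assms(1)] admissible_nabla_of[OF assms(2)]
      not_zeroT_Q_if_witness[OF assms(3)] by blast
qed

lemma not_poisson_if_schouten_nonzero: "schouten_nonzero H H \<Longrightarrow> \<not> poisson H"
  unfolding poisson_def schouten_zero_def schouten_nonzero_def by blast

definition B_sym :: "slin list" where
  "B_sym = [
    [((0,0), PC 1)],
    [((0,2), PC 1)],
    [((1,1), PC 1)],
    [((0,1), PC 1), ((1,1), PM (PC 2) (PV JX)), ((0,2), PM (PC 2) (PV JY))],
    [((1,0), PC 1), ((1,1), PM (PC 2) (PV JY)), ((0,2), PM (PC (-2)) (PV JX))],
    [((0,1), PV (JU (0,2))), ((1,0), PM (PC (-1)) (PV (JU (1,1)))),
     ((0,2), PM (PC 2) (PV (JU (0,1)))), ((1,1), PM (PC (-2)) (PV (JU (1,0))))],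
    [((1,0), PV (JU (0,2))), ((0,1), PV (JU (1,1))),
     ((1,1), PM (PC 2) (PV (JU (0,1)))), ((0,2), PM (PC 2) (PV (JU (1,0))))],
    [((1,0), PA (PA (PV (JU (0,1))) (PM (PV JX) (PV (JU (1,1))))) (PM (PV JY) (PV (JU (0,2))))),
     ((0,1), PA (PA (PV (JU (1,0))) (PM (PV JY) (PV (JU (1,1))))) (PM (PC (-1)) (PM (PV JX) (PV (JU (0,2)))))),
     ((0,2), PM (PC 2) (PA (PM (PV JY) (PV (JU (1,0)))) (PM (PC (-1)) (PM (PV JX) (PV (JU (0,1))))))),
     ((1,1), PM (PC 2) (PA (PM (PV JX) (PV (JU (1,0)))) (PM (PV JY) (PV (JU (0,1))))))],
    [((1,0), PM (PC (-1)) (PA (PA (PV (JU (1,0))) (PM (PV JY) (PV (JU (1,1)))))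
                               (PM (PC (-1)) (PM (PV JX) (PV (JU (0,2))))))),
     ((0,1), PA (PA (PV (JU (0,1))) (PM (PV JX) (PV (JU (1,1))))) (PM (PV JY) (PV (JU (0,2))))),
     ((0,2), PM (PC 2) (PA (PM (PV JX) (PV (JU (1,0)))) (PM (PV JY) (PV (JU (0,1)))))),
     ((1,1), PM (PC (-2)) (PA (PM (PV JY) (PV (JU (1,0)))) (PM (PC (-1)) (PM (PV JX) (PV (JU (0,1)))))))]]"

definition nabla_sym :: "snabla list" where
  "nabla_sym = [[], [], [], [], [],
    [((0,2), (0,1), PC 1), ((1,0), (1,1), PC (-2)), ((0,0), (2,1), PC (-2)), ((1,1), (1,0), PC (-1)),
     ((0,1), (2,0), PC (-1)), ((0,1), (0,2), PC 3), ((0,0), (0,3), PC 2)],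
    [((0,2), (1,0), PC 1), ((1,1), (0,1), PC 1), ((0,1), (1,1), PC 4), ((1,0), (0,2), PC 2),
     ((0,0), (1,2), PC 4)],
    [((1,1), (1,0), PV JX), ((0,2), (1,0), PV JY), ((0,1), (1,0), PC 3), ((0,1), (2,0), PV JX),
     ((1,1), (0,1), PV JY), ((0,2), (0,1), PM (PC (-1)) (PV JX)), ((1,0), (0,1), PC 1),
     ((0,1), (1,1), PM (PC 4) (PV JY)), ((1,0), (1,1), PM (PC 2) (PV JX)), ((0,0), (1,1), PC 6),
     ((0,0), (2,1), PM (PC 2) (PV JX)), ((0,1), (0,2), PM (PC (-3)) (PV JX)),
     ((1,0), (0,2), PM (PC 2) (PV JY)), ((0,0), (1,2), PM (PC 4) (PV JY)),
     ((0,0), (0,3), PM (PC (-2)) (PV JX))],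
    [((1,1), (1,0), PM (PC (-1)) (PV JY)), ((0,2), (1,0), PV JX), ((1,0), (1,0), PC (-1)),
     ((0,0), (2,0), PC (-1)), ((0,1), (2,0), PM (PC (-1)) (PV JY)), ((1,1), (0,1), PV JX),
     ((0,2), (0,1), PV JY), ((0,1), (0,1), PC 3), ((0,1), (1,1), PM (PC 4) (PV JX)),
     ((1,0), (1,1), PM (PC (-2)) (PV JY)), ((0,0), (2,1), PM (PC (-2)) (PV JY)),
     ((0,1), (0,2), PM (PC 3) (PV JY)), ((1,0), (0,2), PM (PC 2) (PV JX)), ((0,0), (0,2), PC 5),
     ((0,0), (1,2), PM (PC 4) (PV JX)), ((0,0), (0,3), PM (PC 2) (PV JY))]]"

lemma B_eq_lin_of:
  assumes "i < 9" shows "B i = lin_of (B_sym ! i)"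
proof -
  have "[B0, B1, B2, B3, B4, B5, B6, B7, B8] = map lin_of B_sym"
    unfolding B0_def B1_def B2_def B3_def B4_def B5_def B6_def B7_def B8_def B_sym_def
      mkL_eq_lin_of[symmetric]
    by (simp add: fun_eq_iff algebra_simps)
  moreover have "length B_sym = 9" by (simp add: B_sym_def)
  ultimately show ?thesis using nth_map[of i B_sym lin_of] assms unfolding B_def by simp
qed

lemma B_sym_low_checks:
  assumes "i < 5"
  shows "bivector_certificate (B_sym ! i) \<and> check_admissible (B_sym ! i) [] \<and> u_free (B_sym ! i)"
proof -
  have "list_all
      (\<lambda>i. bivector_certificate (B_sym ! i) \<and> check_admissible (B_sym ! i) [] \<and> u_free (B_sym ! i))
      [0..<5]"
    by code_simp
  from this[unfolded list_all_iff set_upt, THEN bspec, of i] assms show ?thesis by simp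
qed

lemma B_sym_high_checks:
  assumes "i \<in> {5..<9}"
  shows "bivector_certificate (B_sym ! i) \<and> check_admissible (B_sym ! i) (nabla_sym ! i)"
proof -
  have "list_all
      (\<lambda>i. bivector_certificate (B_sym ! i) \<and> check_admissible (B_sym ! i) (nabla_sym ! i)) [5..<9]"
    by code_simp
  from this[unfolded list_all_iff set_upt, THEN bspec, OF assms] show ?thesis .
qed

lemma B_sym_bracket_checks:
  assumes "i \<in> {5..<9}" "j \<in> {i..<9}"
  shows "ival (sbracket_coeff (B_sym ! i) (nabla_sym ! i) (B_sym ! j) (nabla_sym ! j)) witness_pt \<noteq> 0"
proof -
  have "list_all (\<lambda>i. list_all (\<lambda>j.
      ival (sbracket_coeff (B_sym ! i) (nabla_sym ! i) (B_sym ! j) (nabla_sym ! j)) witness_pt \<noteq> 0)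
      [i..<9]) [5..<9]"
    by code_simp
  from this[unfolded list_all_iff set_upt, THEN bspec, OF assms(1), THEN bspec, OF assms(2)] show ?thesis .
qed

theorem mainTheorem4:
  shows "(\<forall>i\<le>4. poisson (B i))
       \<and> (\<forall>i\<in>{5..8}. var_bivector (B i) \<and> \<not> poisson (B i))
       \<and> (\<forall>i j. 5 \<le> i \<longrightarrow> i \<le> j \<longrightarrow> j \<le> 8 \<longrightarrow> schouten_nonzero (B i) (B j))"
proof (intro conjI allI impI ballI)
  show "poisson (B i)" if "i \<le> 4" for i
    using B_sym_low_checks[of i] that by (simp add: B_eq_lin_of poisson_lin_of_u_free)
  show nonzero: "schouten_nonzero (B i) (B j)" if "5 \<le> i" "i \<le> j" "j \<le> 8" for i j
    using B_sym_high_checks[of i] B_sym_high_checks[of j] B_sym_bracket_checks[of i j] that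
    by (simp add: B_eq_lin_of) (blast intro: schouten_nonzero_lin_of)
  fix i :: nat assume "i \<in> {5..8}"
  then show "var_bivector (B i)" "\<not> poisson (B i)"
    using B_sym_high_checks[of i] nonzero[of i i]
    by (simp_all add: B_eq_lin_of var_bivector_lin_of not_poisson_if_schouten_nonzero)
qed

end
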